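(* Let $(M,d)$ be a metric space and $Y\subseteq M$. Let $\mathcal{N}$ be a $\sigma$-algebra of subsets of $Y$ containing all Borel subsets of $Y$, and let $\nu$ be a measure on $\mathcal{N}$ with $\nu(Y)<+\infty$. Let $\upsilon_Y\in]0,+\infty[$ and assume that $Y$ is upper $\upsilon_Y$-Ahlfors regular with respect to $Y$. Let $s_1,s_2\in[0,\upsilon_Y[$; if $s_1+s_2=\upsilon_Y$, assume furthermore that $Y$ is strongly upper $\upsilon_Y$-Ahlfors regular with respect to $Y$. Let $K_1\in\mathcal{K}_{s_1,Y\times Y}$ and $K_2\in\mathcal{K}_{s_2,Y\times Y}$. Then: (i) If $s_1+s_2\geq\upsilon_Y$, then for each $(x,y)\in Y^2$ with $x\neq y$ the function $t\mapsto K_1(x,t)K_2(t,y)$ is $\nu$-integrable on $Y$, the function $K_3(x,y)\equiv\int_Y K_1(x,t)K_2(t,y)\,d\nu(t)$ is continuous on $\{(x,y)\in Y^2:x\neq y\}$, and \[ \sup_{x,y\in Y,\,x\neq y}|K_3(x,y)|\,d(x,y)^{s_1+s_2-\upsilon_Y}<+\infty \ \text{ if } s_1+s_2>\upsilon_Y,\qquad \sup_{x,y\in Y,\,x\neq y}|K_3(x,y)|\,(1+|\ln d(x,y)|)^{-1}<+\infty \ \text{ if } s_1+s_2=\upsilon_Y. \] (ii) If $s_1+s_2<\upsilon_Y$, then for each $(x,y)\in Y^2$ the function $t\mapsto K_1(x,t)K_2(t,y)$ is $\nu$-integrable on $Y$, the function $\tilde K_3(x,y)\equiv\int_Y K_1(x,t)K_2(t,y)\,d\nu(t)$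 is continuous on $Y^2$, and \[ \sup_{(x,y)\in Y^2}|\tilde K_3(x,y)|\,\bigl(1+d(x,y)^{\upsilon_Y-(s_1+s_2)}\bigr)^{-1}<+\infty. \]
   Context: For $\xi\in M$, $r>0$, $B(\xi,r)=\{\eta\in M: d(\xi,\eta)<r\}$, and $B(\xi,0)=\emptyset$. $Y$ is upper $\upsilon$-Ahlfors regular with respect to $Y$ if there exist $r_0\in]0,+\infty]$, $c_0\in]0,+\infty[$ with $\nu(B(x,r)\cap Y)\leq c_0r^{\upsilon}$ for all $x\in Y$, $r\in]0,r_0[$; strongly upper $\upsilon$-Ahlfors regular with respect to $Y$ if there exist $r_0\in]0,+\infty]$, $c_0\in]0,+\infty[$ with $\nu((B(x,r_2)\setminus B(x,r_1))\cap Y)\leq c_0(r_2^{\upsilon}-r_1^{\upsilon})$ for all $x\in Y$, $r_1,r_2\in[0,r_0[$, $r_1<r_2$. For $s\in\mathbb{R}$, $\mathcal{K}_{s,Y\times Y}$ is the set of continuous functions $K:\{(x,y)\in Y\times Y: x\neq y\}\to\mathbb{C}$ with $\sup_{x\neq y}|K(x,y)|\,d(x,y)^s<+\infty$. *)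

theory Defs
  imports "HOL-Analysis.Analysis"
begin

definition offdiag :: "'a set \<Rightarrow> ('a \<times> 'a) set" where
  "offdiag Y = {p. fst p \<in> Y \<and> snd p \<in> Y \<and> fst p \<noteq> snd p}"

text \<open>The class K_{s,Y x Y}: kernels continuous off the diagonal with
  sup |K(x,y)| d(x,y)^s finite. Values on the diagonal are irrelevant.\<close>
definition kernel_class :: "real \<Rightarrow> 'a::metric_space set \<Rightarrow> ('a \<Rightarrow> 'a \<Rightarrow> complex) set" where
  "kernel_class s Y = {K. continuous_on (offdiag Y) (\<lambda>p. K (fst p) (snd p)) \<and>
      (\<exists>C. \<forall>x\<in>Y. \<forall>y\<in>Y. x \<noteq> y \<longrightarrow> cmod (K x y) * dist x y powr s \<le> C)}"

definition upper_ahlfors_regular :: "'a::metric_space measure \<Rightarrow> 'a set \<Rightarrow> real \<Rightarrow> bool" where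
  "upper_ahlfors_regular nu Y ups \<longleftrightarrow>
     (\<exists>r0::ereal. \<exists>c0::real. r0 > 0 \<and> c0 > 0 \<and>
       (\<forall>x\<in>Y. \<forall>r. 0 < r \<and> ereal r < r0 \<longrightarrow>
          emeasure nu (ball x r \<inter> Y) \<le> ennreal (c0 * r powr ups)))"

definition strongly_upper_ahlfors_regular :: "'a::metric_space measure \<Rightarrow> 'a set \<Rightarrow> real \<Rightarrow> bool" where
  "strongly_upper_ahlfors_regular nu Y ups \<longleftrightarrow>
     (\<exists>r0::ereal. \<exists>c0::real. r0 > 0 \<and> c0 > 0 \<and>
       (\<forall>x\<in>Y. \<forall>r1 r2. 0 \<le> r1 \<and> r1 < r2 \<and> ereal r2 < r0 \<longrightarrow>
          emeasure nu ((ball x r2 - ball x r1) \<inter> Y) \<le> ennreal (c0 * (r2 powr ups - r1 powr ups))))"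

end

theory Submission
  imports Defs
begin

(*
  The kernel product is dominated by A1 A2 d(x,t)^-s1 d(t,y)^-s2, so everything reduces to
  estimates for the potentials t \<mapsto> d(x,t)^-s of an upper Ahlfors regular measure.
  Cutting a ball around x into dyadic shells {a \<le> d(x,t) < 2a}, each of measure at most
  c0 (2a)^ups, gives

    \<integral> over B(x,\<rho>) of d(x,t)^-s \<le> C \<rho>^(ups-s)                 for s < ups,
    \<integral> outside B(x,\<rho>) of d(x,t)^-\<sigma> \<le> C \<rho>^(ups-\<sigma>)          for \<sigma> > ups,
    \<integral> outside B(x,\<rho>) of d(x,t)^-ups \<le> C (1 + |ln \<rho>|),

  the last because only about log(r0/\<rho>) shells contribute, each a bounded amount.
  For x \<noteq> y and d = d(x,y), the integrand is bounded on B(x,d/2) by (d/2)^-s2 d(x,t)^-s1,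
  on B(y,d/2) by (d/2)^-s1 d(t,y)^-s2, and elsewhere by 3^s2 d(x,t)^-(s1+s2), which gives (i).
  If s1 + s2 < ups, the integrand is at most d(x,t)^-(s1+s2) + d(t,y)^-(s1+s2), which gives (ii).
  Continuity follows from dominated convergence away from small balls around the singular
  points, whose contribution is uniformly small by the ball estimate.
*)

lemma small_radius_powr_le:
  fixes c e a :: real
  assumes "0 < e" "0 < a"
  shows "\<exists>\<eta>>0. \<forall>r. 0 < r \<and> r \<le> \<eta> \<longrightarrow> c * r powr a \<le> e"
proof -
  define \<eta> where "\<eta> = (e / (\<bar>c\<bar> + 1)) powr (1/a)"
  have "\<eta> powr a = e / (\<bar>c\<bar> + 1)"
    using assms by (simp add: \<eta>_def powr_powr)
  moreover have "c * r powr a \<le> \<bar>c\<bar> * \<eta> powr a" if "0 < r" "r \<le> \<eta>" for r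
  proof -
    have "c * r powr a \<le> \<bar>c\<bar> * r powr a"
      by (intro mult_right_mono) auto
    also have "\<dots> \<le> \<bar>c\<bar> * \<eta> powr a"
      using that assms by (intro mult_left_mono powr_mono2) auto
    finally show ?thesis .
  qed
  moreover have "\<bar>c\<bar> * (e / (\<bar>c\<bar> + 1)) \<le> e"
    using assms by (simp add: field_simps)
  moreover have "\<eta> > 0"
    using assms by (simp add: \<eta>_def)
  ultimately show ?thesis
    by (metis order_trans)
qed

lemma powr_mult_power:
  fixes \<rho> b e :: real
  assumes "0 < \<rho>" "0 < b"
  shows "(\<rho> * b ^ k) powr e = \<rho> powr e * (b powr e) ^ k"
  using assms by (simp add: powr_mult powr_realpow[symmetric] powr_powr powr_power mult.commute)

lemma nat_ceiling_log_le_ln: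
  fixes r \<rho> :: real
  assumes "0 < r" "0 < \<rho>"
  shows "real (nat \<lceil>log 2 (r / \<rho>)\<rceil>) \<le> (1 + (\<bar>ln r\<bar> + 1) / ln 2) * (1 + \<bar>ln \<rho>\<bar>)"
proof -
  have "real (nat \<lceil>log 2 (r / \<rho>)\<rceil>) \<le> 1 + \<bar>log 2 (r / \<rho>)\<bar>"
    by (cases "0 \<le> \<lceil>log 2 (r / \<rho>)\<rceil>") linarith+
  also have "\<bar>log 2 (r / \<rho>)\<bar> = \<bar>ln r - ln \<rho>\<bar> / ln 2"
    using assms by (simp add: log_def ln_div)
  also have "\<dots> \<le> (\<bar>ln r\<bar> + 1) * (1 + \<bar>ln \<rho>\<bar>) / ln 2"
  proof (intro divide_right_mono)
    have "(\<bar>ln r\<bar> + 1) * (1 + \<bar>ln \<rho>\<bar>) = \<bar>ln r\<bar> + \<bar>ln \<rho>\<bar> + 1 + \<bar>ln r\<bar> * \<bar>ln \<rho>\<bar>"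
      by (simp add: algebra_simps)
    moreover have "0 \<le> \<bar>ln r\<bar> * \<bar>ln \<rho>\<bar>"
      by simp
    ultimately show "\<bar>ln r - ln \<rho>\<bar> \<le> (\<bar>ln r\<bar> + 1) * (1 + \<bar>ln \<rho>\<bar>)"
      using abs_triangle_ineq4[of "ln r" "ln \<rho>"] by linarith
  qed simp
  also have "1 + \<dots> \<le> (1 + (\<bar>ln r\<bar> + 1) / ln 2) * (1 + \<bar>ln \<rho>\<bar>)"
    by (simp add: algebra_simps)
  finally show ?thesis
    by simp
qed

lemma one_plus_abs_ln_half_le:
  fixes d :: real
  assumes "0 < d"
  shows "1 + \<bar>ln (d/2)\<bar> \<le> (1 + ln 2) * (1 + \<bar>ln d\<bar>)"
proof -
  have "\<bar>ln (d/2)\<bar> \<le> \<bar>ln d\<bar> + ln 2"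
    using assms abs_triangle_ineq4[of "ln d" "ln 2"] by (simp add: ln_div)
  moreover have "(1 + ln 2) * (1 + \<bar>ln d\<bar>) = 1 + \<bar>ln d\<bar> + ln 2 + ln 2 * \<bar>ln d\<bar>"
    by (simp add: algebra_simps)
  moreover have "0 \<le> ln 2 * \<bar>ln d\<bar>"
    by simp
  ultimately show ?thesis
    by linarith
qed

lemma powr_mult_le_min_powr:
  fixes a b s1 s2 :: real
  assumes "0 < a" "0 < b" "0 \<le> s1" "0 \<le> s2"
  shows "a powr -s1 * b powr -s2 \<le> min a b powr -(s1 + s2)"
proof (cases "a \<le> b")
  case True
  then have "a powr -s1 * b powr -s2 \<le> a powr -s1 * a powr -s2"
    using assms by (intro mult_left_mono powr_mono2') auto
  then show ?thesis
    using True by (simp add: powr_add[symmetric])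
next
  case False
  then have "a powr -s1 * b powr -s2 \<le> b powr -s1 * b powr -s2"
    using assms by (intro mult_right_mono powr_mono2') auto
  then show ?thesis
    using False by (simp add: powr_add[symmetric])
qed

lemma powr_mult_le_near_powr:
  fixes a b s1 s2 r :: real
  assumes "0 < a" "0 < b" "0 \<le> s1" "0 \<le> s2" "min a b < r"
  shows "a powr -s1 * b powr -s2
    \<le> (if a < r then a powr -(s1 + s2) else 0) + (if b < r then b powr -(s1 + s2) else 0)"
  using powr_mult_le_min_powr[OF assms(1-4)] assms(5)
  by (cases "a \<le> b") (auto simp: min_def add_increasing add_increasing2)

lemma powr_mult_le_near_far:
  fixes a b s1 s2 d :: real
  assumes "0 < a" "0 < b" "0 \<le> s1" "0 \<le> s2" "0 < d" "d \<le> a + b" "a \<le> b + d"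
  shows "a powr -s1 * b powr -s2
    \<le> (if a < d/2 then (d/2) powr -s2 * a powr -s1 else 0)
      + (if b < d/2 then (d/2) powr -s1 * b powr -s2 else 0)
      + (if d/2 \<le> a then 3 powr s2 * a powr -(s1 + s2) else 0)"
proof (cases "a < d/2")
  case True
  then have "a powr -s1 * b powr -s2 \<le> a powr -s1 * (d/2) powr -s2"
    using assms by (intro mult_left_mono powr_mono2') auto
  then show ?thesis
    using True by (simp add: mult.commute add_increasing2)
next
  case a_far: False
  show ?thesis
  proof (cases "b < d/2")
    case True
    then have "a powr -s1 * b powr -s2 \<le> (d/2) powr -s1 * b powr -s2"
      using assms a_far by (intro mult_right_mono powr_mono2') auto
    then show ?thesis
      using True a_far by (simp add: add_increasing2)
  next
    case False
    (* b \<ge> d/2 and a \<le> b + d give b \<ge> a/3 *)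
    then have "b powr -s2 \<le> (a/3) powr -s2"
      using assms by (intro powr_mono2') auto
    also have "(a/3) powr -s2 = 3 powr s2 * a powr -s2"
      using assms by (simp add: powr_divide powr_minus divide_simps)
    finally have "a powr -s1 * b powr -s2 \<le> 3 powr s2 * (a powr -s1 * a powr -s2)"
      by (simp add: mult_left_mono mult.left_commute)
    then show ?thesis
      using False a_far by (simp add: powr_add[symmetric])
  qed
qed

lemma powr_mult_le_separated:
  fixes a b s1 s2 r D :: real
  assumes "0 < a" "0 < b" "0 \<le> s1" "0 \<le> s2" "0 < D" "(a < r \<and> D \<le> b) \<or> (b < r \<and> D \<le> a)"
  shows "a powr -s1 * b powr -s2
    \<le> D powr -s2 * (if a < r then a powr -s1 else 0) + D powr -s1 * (if b < r then b powr -s2 else 0)"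
proof (cases "a < r \<and> D \<le> b")
  case True
  then have "a powr -s1 * b powr -s2 \<le> D powr -s2 * a powr -s1"
    using assms by (subst mult.commute, intro mult_left_mono powr_mono2') auto
  then show ?thesis
    using True by (simp add: add_increasing2)
next
  case False
  then have "b < r" "D \<le> a"
    using assms(6) by auto
  then have "a powr -s1 * b powr -s2 \<le> D powr -s1 * b powr -s2"
    using assms by (intro mult_right_mono powr_mono2') auto
  then show ?thesis
    using \<open>b < r\<close> by (simp add: add_increasing)
qed

lemma dist_lt_of_mem_ball_pair:
  assumes "(x, y) \<in> ball (x0, y0) \<eta>"
  shows "dist x0 x < \<eta>" "dist y0 y < \<eta>"
  using assms dist_fst_le[of "(x0, y0)" "(x, y)"] dist_snd_le[of "(x0, y0)" "(x, y)"] by auto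

lemma dist_ge_if_outside_double_balls:
  assumes "(x, y) \<in> ball (x0, y0) \<eta>" "t \<notin> ball x0 (2 * \<eta>) \<union> ball y0 (2 * \<eta>)"
  shows "\<eta> \<le> dist x t" "\<eta> \<le> dist y t"
  using assms dist_lt_of_mem_ball_pair[OF assms(1)] dist_triangle[of x0 t x] dist_triangle[of y0 t y]
  by auto

section \<open>Continuity of parametric integrals\<close>

lemma integrable_norm_integral_le:
  fixes f :: "'a \<Rightarrow> 'b::{banach, second_countable_topology}"
  assumes "f \<in> borel_measurable M" "(\<integral>\<^sup>+x. ennreal (norm (f x)) \<partial>M) \<le> ennreal B" "0 \<le> B"
  shows "integrable M f \<and> norm (integral\<^sup>L M f) \<le> B"
proof
  show int: "integrable M f"
    using assms by (intro integrableI_bounded) (auto simp: top_unique intro: le_less_trans)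
  have "ennreal (norm (integral\<^sup>L M f)) \<le> ennreal B"
    using integral_norm_bound_ennreal[OF int] assms(2) by (rule order_trans)
  then show "norm (integral\<^sup>L M f) \<le> B"
    using assms(3) by (simp add: ennreal_le_iff)
qed

lemma norm_integral_diff_set_integral_le:
  fixes f :: "'a \<Rightarrow> 'b::{banach, second_countable_topology}"
  assumes f: "integrable M f" and S: "S \<in> sets M"
  shows "ennreal (norm ((LINT t|M. f t) - (LINT t:space M - S|M. f t))) \<le> (\<integral>\<^sup>+t\<in>S. ennreal (norm (f t)) \<partial>M)"
proof -
  have "(LINT t|M. f t) - (LINT t:space M - S|M. f t) = (LINT t|M. f t - indicator (space M - S) t *\<^sub>R f t)"
    unfolding set_lebesgue_integral_def using f S by (simp add: integrable_mult_indicator)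
  also have "\<dots> = (LINT t|M. indicator S t *\<^sub>R f t)"
    by (rule Bochner_Integration.integral_cong) (auto simp: indicator_def)
  finally have "ennreal (norm ((LINT t|M. f t) - (LINT t:space M - S|M. f t)))
      \<le> (\<integral>\<^sup>+t. ennreal (norm (indicator S t *\<^sub>R f t)) \<partial>M)"
    using integral_norm_bound_ennreal[OF integrable_mult_indicator[OF S f]] by simp
  also have "\<dots> = (\<integral>\<^sup>+t\<in>S. ennreal (norm (f t)) \<partial>M)"
    by (intro nn_integral_cong) (auto simp: indicator_def)
  finally show ?thesis .
qed

lemma continuous_within_set_integral_bounded:
  fixes F :: "'p::metric_space \<Rightarrow> 'a \<Rightarrow> 'b::{banach, second_countable_topology}"
  assumes fin: "finite_measure M" and T: "T \<in> sets M"
    and meas: "\<And>p. p \<in> Q \<Longrightarrow> F p \<in> borel_measurable M"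
    and bounded: "\<And>p t. p \<in> Q \<Longrightarrow> t \<in> T \<Longrightarrow> norm (F p t) \<le> B"
    and cont: "\<And>t. t \<in> T \<Longrightarrow> continuous (at p0 within Q) (\<lambda>p. F p t)"
    and p0: "p0 \<in> Q"
  shows "continuous (at p0 within Q) (\<lambda>p. LINT t:T|M. F p t)"
proof (rule continuous_within_sequentiallyI)
  fix u assume u: "u \<longlonglongrightarrow> p0" "\<forall>n. u n \<in> Q"
  show "(\<lambda>n. LINT t:T|M. F (u n) t) \<longlonglongrightarrow> (LINT t:T|M. F p0 t)"
    unfolding set_lebesgue_integral_def
  proof (rule integral_dominated_convergence[where w = "\<lambda>_. max B 0"])
    show "integrable M (\<lambda>_. max B 0)"
      by (rule finite_measure.integrable_const[OF fin])
    show "(\<lambda>t. indicator T t *\<^sub>R F p0 t) \<in> borel_measurable M"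
      "\<And>n. (\<lambda>t. indicator T t *\<^sub>R F (u n) t) \<in> borel_measurable M"
      using meas p0 u(2) T by auto
    show "AE t in M. (\<lambda>n. indicator T t *\<^sub>R F (u n) t) \<longlonglongrightarrow> indicator T t *\<^sub>R F p0 t"
    proof (rule AE_I2)
      fix t
      show "(\<lambda>n. indicator T t *\<^sub>R F (u n) t) \<longlonglongrightarrow> indicator T t *\<^sub>R F p0 t"
      proof (cases "t \<in> T")
        case True
        then have "(\<lambda>n. F (u n) t) \<longlonglongrightarrow> F p0 t"
          using cont u continuous_within_tendsto_compose' by blast
        then show ?thesis
          using True by simp
      qed simp
    qed
    show "\<And>n. AE t in M. norm (indicator T t *\<^sub>R F (u n) t) \<le> max B 0"
      using bounded u(2) by (auto intro!: AE_I2 simp: indicator_def max.coboundedI1)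
  qed
qed

lemma continuous_on_integral_param:
  fixes F :: "'p::metric_space \<Rightarrow> 'a \<Rightarrow> 'b::{banach, second_countable_topology}"
  assumes fin: "finite_measure M"
    and int: "\<And>p. p \<in> P \<Longrightarrow> integrable M (F p)"
    and local: "\<And>p0 e. p0 \<in> P \<Longrightarrow> 0 < e \<Longrightarrow> \<exists>\<delta>>0. \<exists>S\<in>sets M. \<exists>B.
        (\<forall>p\<in>P \<inter> ball p0 \<delta>. (\<integral>\<^sup>+t\<in>S. ennreal (norm (F p t)) \<partial>M) \<le> ennreal e \<and>
                              (\<forall>t\<in>space M - S. norm (F p t) \<le> B)) \<and>
        (\<forall>t\<in>space M - S. continuous_on (P \<inter> ball p0 \<delta>) (\<lambda>p. F p t))"
  shows "continuous_on P (\<lambda>p. LINT t|M. F p t)"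
  unfolding continuous_on_iff
proof (intro ballI allI impI)
  fix p0 r assume p0: "p0 \<in> P" and r: "0 < (r::real)"
  have r3: "0 < r/3"
    using r by simp
  obtain \<delta> S B where \<delta>: "0 < \<delta>" and S: "S \<in> sets M"
    and small: "\<And>p. p \<in> P \<inter> ball p0 \<delta> \<Longrightarrow> (\<integral>\<^sup>+t\<in>S. ennreal (norm (F p t)) \<partial>M) \<le> ennreal (r/3)"
    and bounded: "\<And>p t. p \<in> P \<inter> ball p0 \<delta> \<Longrightarrow> t \<in> space M - S \<Longrightarrow> norm (F p t) \<le> B"
    and cont: "\<And>t. t \<in> space M - S \<Longrightarrow> continuous_on (P \<inter> ball p0 \<delta>) (\<lambda>p. F p t)"
    using local[OF p0 r3] by blast
  have p0_in: "p0 \<in> P \<inter> ball p0 \<delta>"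
    using p0 \<delta> by simp
  define G where "G p = (LINT t:space M - S|M. F p t)" for p
  have approx: "dist (LINT t|M. F p t) (G p) \<le> r/3" if p: "p \<in> P \<inter> ball p0 \<delta>" for p
    using order_trans[OF norm_integral_diff_set_integral_le[OF int S] small[OF p]] p r3
    by (simp add: G_def dist_norm ennreal_le_iff)
  have "continuous (at p0 within P \<inter> ball p0 \<delta>) G"
    unfolding G_def
  proof (rule continuous_within_set_integral_bounded[OF fin _ _ bounded _ p0_in])
    show "space M - S \<in> sets M"
      using sets.top S by (rule sets.Diff)
    show "F p \<in> borel_measurable M" if "p \<in> P \<inter> ball p0 \<delta>" for p
      using that by (intro borel_measurable_integrable int) simp
    show "continuous (at p0 within P \<inter> ball p0 \<delta>) (\<lambda>p. F p t)" if "t \<in> space M - S" for t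
      using cont[OF that] p0_in continuous_on_eq_continuous_within by blast
  qed
  then obtain \<delta>' where \<delta>': "0 < \<delta>'"
    and close: "\<And>p. p \<in> P \<inter> ball p0 \<delta> \<Longrightarrow> dist p p0 < \<delta>' \<Longrightarrow> dist (G p) (G p0) < r/3"
    using r3 unfolding continuous_within_eps_delta by blast
  show "\<exists>d>0. \<forall>p\<in>P. dist p p0 < d \<longrightarrow> dist (LINT t|M. F p t) (LINT t|M. F p0 t) < r"
  proof (intro exI[of _ "min \<delta> \<delta>'"] conjI ballI impI)
    fix p assume "p \<in> P" "dist p p0 < min \<delta> \<delta>'"
    then have p: "p \<in> P \<inter> ball p0 \<delta>" "dist p p0 < \<delta>'"
      by (auto simp: dist_commute)
    have "dist (LINT t|M. F p t) (LINT t|M. F p0 t)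
        \<le> dist (LINT t|M. F p t) (G p) + dist (G p) (G p0) + dist (LINT t|M. F p0 t) (G p0)"
      by (smt (verit) dist_commute dist_triangle)
    also have "\<dots> < r"
      using approx[OF p(1)] approx[OF p0_in] close[OF p] by linarith
    finally show "dist (LINT t|M. F p t) (LINT t|M. F p0 t) < r" .
  qed (use \<delta> \<delta>' in auto)
qed

section \<open>Potentials of an upper Ahlfors regular measure\<close>

lemma upper_ahlfors_regularE:
  assumes "upper_ahlfors_regular nu Y ups"
  obtains r0 c0 :: real where "0 < r0" "0 < c0"
    "\<And>x r. x \<in> Y \<Longrightarrow> 0 < r \<Longrightarrow> r < r0 \<Longrightarrow> emeasure nu (ball x r \<inter> Y) \<le> ennreal (c0 * r powr ups)"
proof -
  obtain R :: ereal and c0 :: real where R: "0 < R" and c0: "0 < c0"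
    and regular: "\<forall>x\<in>Y. \<forall>r. 0 < r \<and> ereal r < R \<longrightarrow> emeasure nu (ball x r \<inter> Y) \<le> ennreal (c0 * r powr ups)"
    using assms unfolding upper_ahlfors_regular_def by blast
  obtain r0 where "0 < ereal r0" "ereal r0 < R"
    using ereal_dense2[OF R] by blast
  then show thesis
    using that[of r0 c0] c0 regular by (meson ereal_less(2) less_ereal.simps(1) order.strict_trans)
qed

locale upper_ahlfors =
  fixes nu :: "'a::metric_space measure" and Y :: "'a set" and ups r0 c0 :: real
  assumes space_nu: "space nu = Y"
    and borel_sets: "sets (restrict_space borel Y) \<subseteq> sets nu"
    and emeasure_Y_finite: "emeasure nu Y < \<infinity>"
    and ups_pos: "0 < ups"
    and r0_pos: "0 < r0"
    and c0_pos: "0 < c0"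
    and ahlfors: "\<And>x r. x \<in> Y \<Longrightarrow> 0 < r \<Longrightarrow> r < r0 \<Longrightarrow>
      emeasure nu (ball x r \<inter> Y) \<le> ennreal (c0 * r powr ups)"
begin

lemma finite_measure_nu: "finite_measure nu"
  using emeasure_Y_finite space_nu by (intro finite_measureI) auto

lemma measurable_nu_if_restrict_borel:
  assumes "f \<in> measurable (restrict_space borel Y) N"
  shows "f \<in> measurable nu N"
proof (rule measurableI)
  fix x assume "x \<in> space nu"
  then show "f x \<in> space N"
    using assms space_nu by (auto simp: measurable_def space_restrict_space)
next
  fix A assume "A \<in> sets N"
  then have "f -` A \<inter> space (restrict_space borel Y) \<in> sets (restrict_space borel Y)"
    by (rule measurable_sets[OF assms])
  then show "f -` A \<inter> space nu \<in> sets nu"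
    using borel_sets space_nu by (auto simp: space_restrict_space)
qed

lemma Int_Y_in_sets_nu:
  assumes "A \<in> sets borel"
  shows "A \<inter> Y \<in> sets nu"
  using assms borel_sets by (auto simp: sets_restrict_space)

lemma borel_measurable_nu_if_continuous_on_punctured:
  fixes f :: "'a \<Rightarrow> 'b::topological_space"
  assumes "continuous_on (Y - {x}) f"
  shows "f \<in> borel_measurable nu"
proof (rule measurable_nu_if_restrict_borel, rule borel_measurableI)
  fix S :: "'b set" assume "open S"
  then obtain T where T: "open T" "f -` S \<inter> (Y - {x}) = T \<inter> (Y - {x})"
    using continuous_on_open_invariant assms by metis
  define B where "B = (T - {x}) \<union> (if f x \<in> S then {x} else {})"
  have "f -` S \<inter> space (restrict_space borel Y) = Y \<inter> B"
    using T(2) by (auto simp: B_def space_restrict_space split: if_splits)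
  moreover have "B \<in> sets borel"
    using T(1) by (auto simp: B_def)
  ultimately show "f -` S \<inter> space (restrict_space borel Y) \<in> sets (restrict_space borel Y)"
    by (auto simp: sets_restrict_space)
qed

lemma borel_measurable_dist_powr_indicator:
  assumes "A \<in> sets borel"
  shows "(\<lambda>t. ennreal (dist x t powr b) * indicator A t) \<in> borel_measurable nu"
proof -
  have "(\<lambda>t. dist x t) \<in> borel_measurable borel"
    by (intro borel_measurable_continuous_onI continuous_intros)
  then have "(\<lambda>t. ennreal (dist x t powr b) * indicator A t) \<in> borel_measurable borel"
    using assms by measurable
  then show ?thesis
    by (intro measurable_nu_if_restrict_borel measurable_restrict_space1)
qed

lemma nn_integral_const_nu: "0 \<le> c \<Longrightarrow> (\<integral>\<^sup>+t. ennreal c \<partial>nu) = ennreal (c * measure nu Y)"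
  using emeasure_Y_finite space_nu by (simp add: emeasure_eq_ennreal_measure ennreal_mult)

lemma emeasure_singleton_eq_0:
  assumes x: "x \<in> Y"
  shows "emeasure nu {x} = 0"
proof -
  have "emeasure nu {x} \<le> 0"
  proof (rule ennreal_le_epsilon)
    fix e :: real assume e: "0 < e"
    obtain \<eta> where \<eta>: "0 < \<eta>" "\<And>r. 0 < r \<and> r \<le> \<eta> \<Longrightarrow> c0 * r powr ups \<le> e"
      using small_radius_powr_le[OF e ups_pos] by blast
    define r where "r = min \<eta> (r0/2)"
    have r: "0 < r" "r \<le> \<eta>" "r < r0"
      using \<eta> r0_pos by (auto simp: r_def)
    have "emeasure nu {x} \<le> emeasure nu (ball x r \<inter> Y)"
      using x r Int_Y_in_sets_nu[of "ball x r"] by (intro emeasure_mono) auto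
    also have "\<dots> \<le> ennreal (c0 * r powr ups)"
      using ahlfors x r by blast
    also have "\<dots> \<le> ennreal e"
      using \<eta>(2) r by (intro ennreal_leI) blast
    finally show "emeasure nu {x} \<le> 0 + ennreal e"
      by simp
  qed
  then show ?thesis
    by simp
qed

lemma AE_neq:
  assumes "x \<in> Y"
  shows "AE t in nu. t \<noteq> x"
  using emeasure_singleton_eq_0[OF assms] Int_Y_in_sets_nu[of "{x}"] assms
  by (intro AE_I'[of "{x}"]) auto

lemma nn_integral_mono_punctured:
  assumes "x \<in> Y" "y \<in> Y" "\<And>t. t \<in> Y \<Longrightarrow> t \<noteq> x \<Longrightarrow> t \<noteq> y \<Longrightarrow> f t \<le> g t"
  shows "(\<integral>\<^sup>+t. f t \<partial>nu) \<le> (\<integral>\<^sup>+t. g t \<partial>nu)"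
  using AE_neq[OF assms(1)] AE_neq[OF assms(2)] AE_space
  by (intro nn_integral_mono_AE, eventually_elim) (use assms(3) space_nu in auto)

lemma nn_integral_le_suminf_balls:
  fixes f :: "'a \<Rightarrow> ennreal" and R b :: "nat \<Rightarrow> real"
  assumes "f \<in> borel_measurable nu"
    and cover: "\<And>t. t \<in> Y \<Longrightarrow> f t \<noteq> 0 \<Longrightarrow> \<exists>k. t \<in> ball x (R k) \<and> f t \<le> ennreal (b k)"
  shows "(\<integral>\<^sup>+t. f t \<partial>nu) \<le> (\<Sum>k. ennreal (b k) * emeasure nu (ball x (R k) \<inter> Y))"
proof -
  have "(\<integral>\<^sup>+t. f t \<partial>nu) \<le> (\<integral>\<^sup>+t. (\<Sum>k. ennreal (b k) * indicator (ball x (R k) \<inter> Y) t) \<partial>nu)"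
  proof (rule nn_integral_mono)
    fix t assume t: "t \<in> space nu"
    show "f t \<le> (\<Sum>k. ennreal (b k) * indicator (ball x (R k) \<inter> Y) t)"
    proof (cases "f t = 0")
      case False
      then obtain k where k: "t \<in> ball x (R k)" "f t \<le> ennreal (b k)"
        using cover t space_nu by auto
      define g where "g = (\<lambda>j. ennreal (b j) * indicator (ball x (R j) \<inter> Y) t)"
      have "f t \<le> sum g {k}"
        using k t space_nu by (simp add: g_def)
      also have "\<dots> \<le> suminf g"
        by (rule sum_le_suminf) auto
      finally show ?thesis
        unfolding g_def .
    qed simp
  qed
  also have "\<dots> = (\<Sum>k. ennreal (b k) * emeasure nu (ball x (R k) \<inter> Y))"
    using Int_Y_in_sets_nu[of "ball _ _"]
    by (simp add: nn_integral_suminf nn_integral_cmult_indicator)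
  finally show ?thesis .
qed

lemma set_nn_integral_dist_powr_le_shells:
  assumes x: "x \<in> Y" and A: "A \<in> sets borel" and \<sigma>: "0 \<le> \<sigma>" and a: "\<And>k. 0 < a k"
    and cover: "\<And>t. t \<in> A \<inter> Y \<Longrightarrow> t \<noteq> x \<Longrightarrow>
      \<exists>k. a k \<le> dist x t \<and> dist x t < 2 * a k \<and> 2 * a k < r0"
  shows "(\<integral>\<^sup>+t\<in>A. ennreal (dist x t powr -\<sigma>) \<partial>nu)
    \<le> (\<Sum>k. ennreal (if 2 * a k < r0 then c0 * 2 powr ups * a k powr (ups - \<sigma>) else 0))"
proof -
  define b where "b k = (if 2 * a k < r0 then a k powr -\<sigma> else 0)" for k
  have "(\<integral>\<^sup>+t\<in>A. ennreal (dist x t powr -\<sigma>) \<partial>nu)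
      \<le> (\<Sum>k. ennreal (b k) * emeasure nu (ball x (2 * a k) \<inter> Y))"
  proof (rule nn_integral_le_suminf_balls)
    show "(\<lambda>t. ennreal (dist x t powr -\<sigma>) * indicator A t) \<in> borel_measurable nu"
      using A by (rule borel_measurable_dist_powr_indicator)
    fix t assume t: "t \<in> Y" and "ennreal (dist x t powr -\<sigma>) * indicator A t \<noteq> 0"
    then have tA: "t \<in> A" and "t \<noteq> x"
      by (auto simp: indicator_def split: if_splits)
    then obtain k where k: "a k \<le> dist x t" "dist x t < 2 * a k" "2 * a k < r0"
      using cover t by blast
    have "dist x t powr -\<sigma> \<le> a k powr -\<sigma>"
      using k a \<sigma> by (intro powr_mono2') auto
    then show "\<exists>k. t \<in> ball x (2 * a k) \<and> ennreal (dist x t powr -\<sigma>) * indicator A t \<le> ennreal (b k)"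
      using k tA by (intro exI[of _ k]) (auto simp: b_def intro: ennreal_leI)
  qed
  also have "\<dots> \<le> (\<Sum>k. ennreal (if 2 * a k < r0 then c0 * 2 powr ups * a k powr (ups - \<sigma>) else 0))"
  proof (rule suminf_le)
    fix k
    show "ennreal (b k) * emeasure nu (ball x (2 * a k) \<inter> Y)
        \<le> ennreal (if 2 * a k < r0 then c0 * 2 powr ups * a k powr (ups - \<sigma>) else 0)"
    proof (cases "2 * a k < r0")
      case True
      have "0 < 2 * a k"
        using a by simp
      then have "ennreal (b k) * emeasure nu (ball x (2 * a k) \<inter> Y)
          \<le> ennreal (a k powr -\<sigma>) * ennreal (c0 * (2 * a k) powr ups)"
        using ahlfors[OF x _ True] True by (simp add: b_def mult_left_mono)
      also have "\<dots> = ennreal (a k powr -\<sigma> * (c0 * (2 * a k) powr ups))"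
        by (rule ennreal_mult'[symmetric]) simp
      also have "a k powr -\<sigma> * (c0 * (2 * a k) powr ups) = c0 * 2 powr ups * a k powr (ups - \<sigma>)"
        using powr_add[of "a k" ups "-\<sigma>"] by (simp add: powr_mult mult_ac)
      finally show ?thesis
        using True by simp
    qed (simp add: b_def)
  qed auto
  finally show ?thesis .
qed

lemma set_nn_integral_ball_dist_powr_le_small:
  assumes s: "0 \<le> s" "s < ups"
  obtains C where "0 \<le> C" "\<And>x \<rho>. x \<in> Y \<Longrightarrow> 0 < \<rho> \<Longrightarrow> \<rho> < r0 \<Longrightarrow>
    (\<integral>\<^sup>+t\<in>ball x \<rho>. ennreal (dist x t powr -s) \<partial>nu) \<le> ennreal (C * \<rho> powr (ups - s))"
proof
  define q :: real where "q = (1/2) powr (ups - s)"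
  have "(1/2::real) powr (ups - s) < (1/2) powr 0"
    using s by (intro powr_less_mono') auto
  then have q: "0 < q" "q < 1"
    by (auto simp: q_def)
  show "0 \<le> c0 * 2 powr ups * q / (1 - q)"
    using q c0_pos by simp
  fix x \<rho> assume x: "x \<in> Y" and \<rho>: "0 < \<rho>" "\<rho> < r0"
  define a where "a k = \<rho> / 2 * (1/2) ^ k" for k :: nat
  have "(\<integral>\<^sup>+t\<in>ball x \<rho>. ennreal (dist x t powr -s) \<partial>nu)
      \<le> (\<Sum>k. ennreal (if 2 * a k < r0 then c0 * 2 powr ups * a k powr (ups - s) else 0))"
  proof (rule set_nn_integral_dist_powr_le_shells[OF x _ s(1)])
    fix t assume t: "t \<in> ball x \<rho> \<inter> Y" "t \<noteq> x"
    obtain n where "(1/2::real) ^ n < dist x t / \<rho>"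
      using real_arch_pow_inv[of "dist x t / \<rho>" "1/2"] t \<rho> by auto
    then have "\<rho> * (1/2) ^ n \<le> dist x t"
      using \<rho> by (simp add: field_simps)
    then obtain k where k: "\<forall>i\<le>k. \<not> \<rho> * (1/2) ^ i \<le> dist x t" "\<rho> * (1/2) ^ Suc k \<le> dist x t"
      using ex_least_nat_less[of "\<lambda>i. \<rho> * (1/2) ^ i \<le> dist x t"] t by auto
    moreover have "\<rho> * (1/2) ^ k < r0"
    proof -
      have "\<rho> * (1/2) ^ k \<le> \<rho>"
        using \<rho> by (intro mult_left_le) (simp_all add: power_le_one)
      then show ?thesis
        using \<rho> by linarith
    qed
    ultimately show "\<exists>k. a k \<le> dist x t \<and> dist x t < 2 * a k \<and> 2 * a k < r0"
      using \<rho> by (intro exI[of _ k]) (auto simp: a_def)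
  qed (use \<rho> in \<open>auto simp: a_def\<close>)
  also have "\<dots> \<le> (\<Sum>k. ennreal (c0 * 2 powr ups * (\<rho> / 2) powr (ups - s) * q ^ k))"
  proof -
    have "a k powr (ups - s) = (\<rho> / 2) powr (ups - s) * q ^ k" for k
      unfolding a_def q_def using \<rho> by (intro powr_mult_power) simp_all
    then show ?thesis
      using q c0_pos by (intro suminf_le) (auto intro!: ennreal_leI)
  qed
  also have "\<dots> = ennreal (\<Sum>k. c0 * 2 powr ups * (\<rho> / 2) powr (ups - s) * q ^ k)"
    using q c0_pos by (intro suminf_ennreal2 summable_mult summable_geometric) auto
  also have "(\<Sum>k. c0 * 2 powr ups * (\<rho> / 2) powr (ups - s) * q ^ k) = c0 * 2 powr ups * q / (1 - q) * \<rho> powr (ups - s)"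
    using q \<rho> by (simp add: suminf_mult suminf_geometric powr_divide q_def divide_powr_uminus)
  finally show "(\<integral>\<^sup>+t\<in>ball x \<rho>. ennreal (dist x t powr -s) \<partial>nu) \<le> ennreal (c0 * 2 powr ups * q / (1 - q) * \<rho> powr (ups - s))" .
qed

lemma nn_integral_dist_powr_bounded:
  assumes s: "0 \<le> s" "s < ups"
  obtains G where "0 \<le> G" "\<And>x. x \<in> Y \<Longrightarrow> (\<integral>\<^sup>+t. ennreal (dist x t powr -s) \<partial>nu) \<le> ennreal G"
proof -
  obtain C where C: "0 \<le> C" and ball_le: "\<And>x \<rho>. x \<in> Y \<Longrightarrow> 0 < \<rho> \<Longrightarrow> \<rho> < r0 \<Longrightarrow>
      (\<integral>\<^sup>+t\<in>ball x \<rho>. ennreal (dist x t powr -s) \<partial>nu) \<le> ennreal (C * \<rho> powr (ups - s))"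
    using set_nn_integral_ball_dist_powr_le_small[OF s] by blast
  define G where "G = C * (r0/2) powr (ups - s) + (r0/2) powr -s * measure nu Y"
  have "(\<integral>\<^sup>+t. ennreal (dist x t powr -s) \<partial>nu) \<le> ennreal G" if x: "x \<in> Y" for x
  proof -
  have "(\<integral>\<^sup>+t. ennreal (dist x t powr -s) \<partial>nu)
      \<le> (\<integral>\<^sup>+t. ennreal (dist x t powr -s) * indicator (ball x (r0/2)) t + ennreal ((r0/2) powr -s) \<partial>nu)"
  proof (rule nn_integral_mono)
    fix t
    show "ennreal (dist x t powr -s) \<le> ennreal (dist x t powr -s) * indicator (ball x (r0/2)) t + ennreal ((r0/2) powr -s)"
    proof (cases "t \<in> ball x (r0/2)")
      case False
      then have "dist x t powr -s \<le> (r0/2) powr -s"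
        using r0_pos s by (intro powr_mono2') auto
      then show ?thesis
        using False by (simp add: ennreal_leI)
    qed simp
  qed
  also have "\<dots> = (\<integral>\<^sup>+t\<in>ball x (r0/2). ennreal (dist x t powr -s) \<partial>nu) + ennreal ((r0/2) powr -s * measure nu Y)"
    by (simp add: nn_integral_add borel_measurable_dist_powr_indicator nn_integral_const_nu
             del: nn_integral_const)
  also have "\<dots> \<le> ennreal (C * (r0/2) powr (ups - s)) + ennreal ((r0/2) powr -s * measure nu Y)"
    using ball_le[OF x, of "r0/2"] r0_pos by (intro add_right_mono) auto
  also have "\<dots> = ennreal G"
    using C by (simp add: G_def ennreal_plus)
  finally show ?thesis .
  qed
  moreover have "0 \<le> G"
    using C by (simp add: G_def)
  ultimately show thesis
    using that by blast
qed

lemma set_nn_integral_ball_dist_powr_le: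
  assumes s: "0 \<le> s" "s < ups"
  obtains C where "0 \<le> C" "\<And>x \<rho>. x \<in> Y \<Longrightarrow> 0 < \<rho> \<Longrightarrow>
    (\<integral>\<^sup>+t\<in>ball x \<rho>. ennreal (dist x t powr -s) \<partial>nu) \<le> ennreal (C * \<rho> powr (ups - s))"
proof -
  obtain C where C: "0 \<le> C" and small: "\<And>x \<rho>. x \<in> Y \<Longrightarrow> 0 < \<rho> \<Longrightarrow> \<rho> < r0 \<Longrightarrow>
      (\<integral>\<^sup>+t\<in>ball x \<rho>. ennreal (dist x t powr -s) \<partial>nu) \<le> ennreal (C * \<rho> powr (ups - s))"
    using set_nn_integral_ball_dist_powr_le_small[OF s] by blast
  obtain G where G: "0 \<le> G" and bounded: "\<And>x. x \<in> Y \<Longrightarrow> (\<integral>\<^sup>+t. ennreal (dist x t powr -s) \<partial>nu) \<le> ennreal G"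
    using nn_integral_dist_powr_bounded[OF s] by blast
  define C' where "C' = max C (G * r0 powr (s - ups))"
  have "(\<integral>\<^sup>+t\<in>ball x \<rho>. ennreal (dist x t powr -s) \<partial>nu) \<le> ennreal (C' * \<rho> powr (ups - s))"
    if x: "x \<in> Y" and \<rho>: "0 < \<rho>" for x \<rho>
  proof (cases "\<rho> < r0")
    case True
    have "C * \<rho> powr (ups - s) \<le> C' * \<rho> powr (ups - s)"
      by (intro mult_right_mono) (auto simp: C'_def)
    then show ?thesis
      using small[OF x \<rho> True] by (meson ennreal_leI order_trans)
  next
    case False
    have "(\<integral>\<^sup>+t\<in>ball x \<rho>. ennreal (dist x t powr -s) \<partial>nu) \<le> (\<integral>\<^sup>+t. ennreal (dist x t powr -s) \<partial>nu)"
      by (intro nn_integral_mono) (auto simp: indicator_def)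
    also have "\<dots> \<le> ennreal G"
      by (rule bounded[OF x])
    also have "G = G * r0 powr (s - ups) * r0 powr (ups - s)"
      using r0_pos by (simp add: powr_add[symmetric])
    also have "\<dots> \<le> C' * \<rho> powr (ups - s)"
      using False r0_pos s G C by (intro mult_mono powr_mono2) (auto simp: C'_def)
    finally show ?thesis
      by (simp add: ennreal_leI)
  qed
  moreover have "0 \<le> C'"
    using C by (simp add: C'_def)
  ultimately show thesis
    using that by blast
qed

lemma set_nn_integral_annulus_dist_powr_le:
  assumes x: "x \<in> Y" and \<rho>: "0 < \<rho>" and \<sigma>: "0 \<le> \<sigma>"
  shows "(\<integral>\<^sup>+t\<in>ball x (r0/2) - ball x \<rho>. ennreal (dist x t powr -\<sigma>) \<partial>nu)
    \<le> (\<Sum>k. ennreal (if 2 * (\<rho> * 2 ^ k) < r0 then c0 * 2 powr ups * (\<rho> * 2 ^ k) powr (ups - \<sigma>) else 0))"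
proof (rule set_nn_integral_dist_powr_le_shells[OF x _ \<sigma>])
  fix t assume t: "t \<in> (ball x (r0/2) - ball x \<rho>) \<inter> Y"
  obtain n where "dist x t / \<rho> < 2 ^ n"
    using real_arch_pow[of 2 "dist x t / \<rho>"] by auto
  then have "dist x t < \<rho> * 2 ^ n"
    using \<rho> by (simp add: field_simps)
  then obtain k where "\<forall>i\<le>k. \<not> dist x t < \<rho> * 2 ^ i" "dist x t < \<rho> * 2 ^ Suc k"
    using ex_least_nat_less[of "\<lambda>i. dist x t < \<rho> * 2 ^ i"] t by auto
  then show "\<exists>k. \<rho> * 2 ^ k \<le> dist x t \<and> dist x t < 2 * (\<rho> * 2 ^ k) \<and> 2 * (\<rho> * 2 ^ k) < r0"
    using t by (intro exI[of _ k]) auto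
qed (use \<rho> in auto)

lemma set_nn_integral_outside_ball_le_annulus:
  assumes x: "x \<in> Y" and \<rho>: "0 < \<rho>" and \<sigma>: "ups \<le> \<sigma>"
  shows "(\<integral>\<^sup>+t\<in>-ball x \<rho>. ennreal (dist x t powr -\<sigma>) \<partial>nu)
    \<le> (\<integral>\<^sup>+t\<in>ball x (r0/2) - ball x \<rho>. ennreal (dist x t powr -\<sigma>) \<partial>nu)
      + ennreal ((r0/2) powr -ups * \<rho> powr (ups - \<sigma>) * measure nu Y)"
proof -
  have far: "dist x t powr -\<sigma> \<le> (r0/2) powr -ups * \<rho> powr (ups - \<sigma>)"
    if "\<rho> \<le> dist x t" "r0/2 \<le> dist x t" for t
  proof -
    have "dist x t powr -\<sigma> = dist x t powr -ups * dist x t powr (ups - \<sigma>)"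
      by (simp add: powr_add[symmetric])
    also have "\<dots> \<le> (r0/2) powr -ups * \<rho> powr (ups - \<sigma>)"
      using that \<rho> r0_pos ups_pos \<sigma> by (intro mult_mono powr_mono2') auto
    finally show ?thesis .
  qed
  have "(\<integral>\<^sup>+t\<in>-ball x \<rho>. ennreal (dist x t powr -\<sigma>) \<partial>nu)
      \<le> (\<integral>\<^sup>+t. ennreal (dist x t powr -\<sigma>) * indicator (ball x (r0/2) - ball x \<rho>) t
               + ennreal ((r0/2) powr -ups * \<rho> powr (ups - \<sigma>)) \<partial>nu)"
    using far by (intro nn_integral_mono) (auto simp: indicator_def intro: ennreal_leI)
  also have "\<dots> = (\<integral>\<^sup>+t\<in>ball x (r0/2) - ball x \<rho>. ennreal (dist x t powr -\<sigma>) \<partial>nu)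
      + ennreal ((r0/2) powr -ups * \<rho> powr (ups - \<sigma>) * measure nu Y)"
    by (simp add: nn_integral_add borel_measurable_dist_powr_indicator nn_integral_const_nu
             del: nn_integral_const)
  finally show ?thesis .
qed

lemma set_nn_integral_outside_ball_dist_powr_le:
  assumes \<sigma>: "ups < \<sigma>"
  obtains C where "0 \<le> C" "\<And>x \<rho>. x \<in> Y \<Longrightarrow> 0 < \<rho> \<Longrightarrow>
    (\<integral>\<^sup>+t\<in>-ball x \<rho>. ennreal (dist x t powr -\<sigma>) \<partial>nu) \<le> ennreal (C * \<rho> powr (ups - \<sigma>))"
proof -
  define q :: real where "q = 2 powr (ups - \<sigma>)"
  have "2 powr (ups - \<sigma>) < (2::real) powr 0"
    using \<sigma> by (intro powr_less_mono) auto
  then have q: "0 < q" "q < 1"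
    by (auto simp: q_def)
  define C where "C = c0 * 2 powr ups / (1 - q) + (r0/2) powr -ups * measure nu Y"
  have "(\<integral>\<^sup>+t\<in>-ball x \<rho>. ennreal (dist x t powr -\<sigma>) \<partial>nu) \<le> ennreal (C * \<rho> powr (ups - \<sigma>))"
    if x: "x \<in> Y" and \<rho>: "0 < \<rho>" for x \<rho>
  proof -
    have "(\<integral>\<^sup>+t\<in>ball x (r0/2) - ball x \<rho>. ennreal (dist x t powr -\<sigma>) \<partial>nu)
      \<le> (\<Sum>k. ennreal (if 2 * (\<rho> * 2 ^ k) < r0 then c0 * 2 powr ups * (\<rho> * 2 ^ k) powr (ups - \<sigma>) else 0))"
      using \<sigma> ups_pos by (intro set_nn_integral_annulus_dist_powr_le[OF x \<rho>]) simp
    also have "\<dots> \<le> (\<Sum>k. ennreal (c0 * 2 powr ups * \<rho> powr (ups - \<sigma>) * q ^ k))"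
      using \<rho> q c0_pos by (intro suminf_le) (auto simp: powr_mult_power q_def intro!: ennreal_leI)
    also have "\<dots> = ennreal (\<Sum>k. c0 * 2 powr ups * \<rho> powr (ups - \<sigma>) * q ^ k)"
      using q c0_pos by (intro suminf_ennreal2 summable_mult summable_geometric) auto
    also have "(\<Sum>k. c0 * 2 powr ups * \<rho> powr (ups - \<sigma>) * q ^ k) = c0 * 2 powr ups / (1 - q) * \<rho> powr (ups - \<sigma>)"
      using q by (simp add: suminf_mult suminf_geometric)
    finally have "(\<integral>\<^sup>+t\<in>-ball x \<rho>. ennreal (dist x t powr -\<sigma>) \<partial>nu)
        \<le> ennreal (c0 * 2 powr ups / (1 - q) * \<rho> powr (ups - \<sigma>))
          + ennreal ((r0/2) powr -ups * \<rho> powr (ups - \<sigma>) * measure nu Y)"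
      using set_nn_integral_outside_ball_le_annulus[OF x \<rho>] \<sigma>
      by (meson add_right_mono less_imp_le order_trans)
    also have "\<dots> = ennreal (C * \<rho> powr (ups - \<sigma>))"
      using q c0_pos by (simp add: C_def ennreal_plus[symmetric] algebra_simps del: ennreal_plus)
    finally show ?thesis .
  qed
  moreover have "0 \<le> C"
    using q c0_pos by (simp add: C_def)
  ultimately show thesis
    using that by blast
qed

lemma set_nn_integral_annulus_dist_powr_le_count:
  assumes x: "x \<in> Y" and \<rho>: "0 < \<rho>"
  shows "(\<integral>\<^sup>+t\<in>ball x (r0/2) - ball x \<rho>. ennreal (dist x t powr -ups) \<partial>nu)
    \<le> ennreal (real (nat \<lceil>log 2 (r0 / \<rho>)\<rceil>) * (c0 * 2 powr ups))"
proof -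
  define N where "N = nat \<lceil>log 2 (r0 / \<rho>)\<rceil>"
  have shell_index: "k < N" if "2 * (\<rho> * 2 ^ k) < r0" for k
  proof -
    have "\<rho> * 2 ^ k \<le> 2 * (\<rho> * 2 ^ k)"
      using \<rho> by simp
    then have "\<rho> * 2 ^ k < r0"
      using that by linarith
    then have "(2::real) ^ k < r0 / \<rho>"
      using \<rho> by (simp add: field_simps)
    then have "log 2 (2 ^ k) < log 2 (r0 / \<rho>)"
      using \<rho> r0_pos by (subst log_less_cancel_iff) auto
    then show "k < N"
      unfolding N_def by (simp add: log_nat_power) linarith
  qed
  have "(\<integral>\<^sup>+t\<in>ball x (r0/2) - ball x \<rho>. ennreal (dist x t powr -ups) \<partial>nu)
    \<le> (\<Sum>k. ennreal (if 2 * (\<rho> * 2 ^ k) < r0 then c0 * 2 powr ups * (\<rho> * 2 ^ k) powr (ups - ups) else 0))"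
    using ups_pos by (intro set_nn_integral_annulus_dist_powr_le[OF x \<rho>]) simp
  also have "\<dots> \<le> (\<Sum>k. ennreal (if k < N then c0 * 2 powr ups else 0))"
    using \<rho> shell_index by (intro suminf_le) auto
  also have "\<dots> = (\<Sum>k<N. ennreal (c0 * 2 powr ups))"
    by (subst suminf_finite[of "{..<N}"]) auto
  also have "\<dots> = ennreal (real N * (c0 * 2 powr ups))"
    using c0_pos by (simp add: ennreal_of_nat_eq_real_of_nat ennreal_mult)
  finally show ?thesis
    by (simp add: N_def)
qed

lemma set_nn_integral_outside_ball_dist_powr_le_log:
  obtains C where "0 \<le> C" "\<And>x \<rho>. x \<in> Y \<Longrightarrow> 0 < \<rho> \<Longrightarrow>
    (\<integral>\<^sup>+t\<in>-ball x \<rho>. ennreal (dist x t powr -ups) \<partial>nu) \<le> ennreal (C * (1 + \<bar>ln \<rho>\<bar>))"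
proof -
  define A where "A = c0 * 2 powr ups * (1 + (\<bar>ln r0\<bar> + 1) / ln 2)"
  define V where "V = (r0/2) powr -ups * measure nu Y"
  have AV: "0 \<le> A" "0 \<le> V"
    using c0_pos by (simp_all add: A_def V_def)
  have "(\<integral>\<^sup>+t\<in>-ball x \<rho>. ennreal (dist x t powr -ups) \<partial>nu) \<le> ennreal ((A + V) * (1 + \<bar>ln \<rho>\<bar>))"
    if x: "x \<in> Y" and \<rho>: "0 < \<rho>" for x \<rho>
  proof -
    have "(\<integral>\<^sup>+t\<in>-ball x \<rho>. ennreal (dist x t powr -ups) \<partial>nu)
        \<le> (\<integral>\<^sup>+t\<in>ball x (r0/2) - ball x \<rho>. ennreal (dist x t powr -ups) \<partial>nu)
          + ennreal ((r0/2) powr -ups * \<rho> powr (ups - ups) * measure nu Y)"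
      by (rule set_nn_integral_outside_ball_le_annulus[OF x \<rho> order_refl])
    also have "\<dots> \<le> ennreal (A * (1 + \<bar>ln \<rho>\<bar>)) + ennreal (V * (1 + \<bar>ln \<rho>\<bar>))"
    proof (intro add_mono order_trans[OF set_nn_integral_annulus_dist_powr_le_count[OF x \<rho>]] ennreal_leI)
      show "real (nat \<lceil>log 2 (r0 / \<rho>)\<rceil>) * (c0 * 2 powr ups) \<le> A * (1 + \<bar>ln \<rho>\<bar>)"
        using nat_ceiling_log_le_ln[OF r0_pos \<rho>] c0_pos by (simp add: A_def mult_ac)
      have "V * 1 \<le> V * (1 + \<bar>ln \<rho>\<bar>)"
        using AV by (intro mult_left_mono) auto
      then show "(r0/2) powr -ups * \<rho> powr (ups - ups) * measure nu Y \<le> V * (1 + \<bar>ln \<rho>\<bar>)"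
        using \<rho> by (simp add: V_def)
    qed
    also have "\<dots> = ennreal ((A + V) * (1 + \<bar>ln \<rho>\<bar>))"
      using AV by (simp add: ennreal_plus[symmetric] algebra_simps del: ennreal_plus)
    finally show ?thesis .
  qed
  with AV show thesis
    using that[of "A + V"] by simp
qed

(* Two-term bounds are the instances with c = 0 and C = {}. *)
lemma set_nn_integral_le_potentials:
  assumes x: "x \<in> Y" and y: "y \<in> Y" and sets: "A \<in> sets borel" "B \<in> sets borel" "C \<in> sets borel"
    and coeffs: "0 \<le> a" "0 \<le> b" "0 \<le> c"
    and le: "\<And>t. t \<in> S \<inter> Y \<Longrightarrow> t \<noteq> x \<Longrightarrow> t \<noteq> y \<Longrightarrow>
      f t \<le> a * (dist x t powr -\<alpha> * indicator A t) + b * (dist y t powr -\<beta> * indicator B t)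
        + c * (dist x t powr -\<gamma> * indicator C t)"
  shows "(\<integral>\<^sup>+t\<in>S. ennreal (f t) \<partial>nu)
    \<le> ennreal a * (\<integral>\<^sup>+t\<in>A. ennreal (dist x t powr -\<alpha>) \<partial>nu)
      + ennreal b * (\<integral>\<^sup>+t\<in>B. ennreal (dist y t powr -\<beta>) \<partial>nu)
      + ennreal c * (\<integral>\<^sup>+t\<in>C. ennreal (dist x t powr -\<gamma>) \<partial>nu)"
proof -
  have weighted: "ennreal k * (ennreal (dist z t powr e) * indicator D t) = ennreal (k * (dist z t powr e * indicator D t))"
    if "0 \<le> k" for k z t e and D :: "'a set"
    using that by (simp add: ennreal_mult' indicator_def)
  have meas: "(\<lambda>t. ennreal k * (ennreal (dist z t powr e) * indicator D t)) \<in> borel_measurable nu"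
    if "D \<in> sets borel" for k z e D
    using that by (intro borel_measurable_times_ennreal borel_measurable_const borel_measurable_dist_powr_indicator)
  have "(\<integral>\<^sup>+t\<in>S. ennreal (f t) \<partial>nu)
      \<le> (\<integral>\<^sup>+t. ennreal a * (ennreal (dist x t powr -\<alpha>) * indicator A t)
          + ennreal b * (ennreal (dist y t powr -\<beta>) * indicator B t)
          + ennreal c * (ennreal (dist x t powr -\<gamma>) * indicator C t) \<partial>nu)"
  proof (rule nn_integral_mono_punctured[OF x y])
    fix t assume "t \<in> Y" "t \<noteq> x" "t \<noteq> y"
    then show "ennreal (f t) * indicator S t
        \<le> ennreal a * (ennreal (dist x t powr -\<alpha>) * indicator A t)
          + ennreal b * (ennreal (dist y t powr -\<beta>) * indicator B t)
          + ennreal c * (ennreal (dist x t powr -\<gamma>) * indicator C t)"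
      using le[of t] coeffs
      by (cases "t \<in> S") (simp_all add: weighted ennreal_plus[symmetric] ennreal_leI del: ennreal_plus)
  qed
  also have "\<dots> = ennreal a * (\<integral>\<^sup>+t\<in>A. ennreal (dist x t powr -\<alpha>) \<partial>nu)
      + ennreal b * (\<integral>\<^sup>+t\<in>B. ennreal (dist y t powr -\<beta>) \<partial>nu)
      + ennreal c * (\<integral>\<^sup>+t\<in>C. ennreal (dist x t powr -\<gamma>) \<partial>nu)"
    using sets by (simp add: nn_integral_add nn_integral_cmult meas borel_measurable_add
        borel_measurable_dist_powr_indicator)
  finally show ?thesis .
qed

end

section \<open>Products of singular kernels\<close>

lemma kernel_classE:
  assumes "K \<in> kernel_class s Y"
  obtains A where "0 \<le> A" "continuous_on (offdiag Y) (\<lambda>p. K (fst p) (snd p))"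
    "\<And>x y. x \<in> Y \<Longrightarrow> y \<in> Y \<Longrightarrow> x \<noteq> y \<Longrightarrow> cmod (K x y) \<le> A * dist x y powr -s"
proof -
  obtain C where C: "\<And>x y. x \<in> Y \<Longrightarrow> y \<in> Y \<Longrightarrow> x \<noteq> y \<Longrightarrow> cmod (K x y) * dist x y powr s \<le> C"
    using assms unfolding kernel_class_def by blast
  have "cmod (K x y) \<le> max C 0 * dist x y powr -s" if "x \<in> Y" "y \<in> Y" "x \<noteq> y" for x y
  proof -
    have "cmod (K x y) \<le> max C 0 / dist x y powr s"
      using C[OF that] that by (simp add: field_simps max.coboundedI1)
    then show ?thesis
      by (simp add: powr_minus divide_inverse)
  qed
  then show thesis
    using that[of "max C 0"] assms unfolding kernel_class_def by auto
qed

locale kernel_pair = upper_ahlfors nu Y ups r0 c0 for nu :: "'a::metric_space measure" and Y ups r0 c0 +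
  fixes K1 K2 :: "'a \<Rightarrow> 'a \<Rightarrow> complex" and s1 s2 A1 A2 :: real
  assumes s1: "0 \<le> s1" "s1 < ups" and s2: "0 \<le> s2" "s2 < ups"
    and K1_cont: "continuous_on (offdiag Y) (\<lambda>p. K1 (fst p) (snd p))"
    and K2_cont: "continuous_on (offdiag Y) (\<lambda>p. K2 (fst p) (snd p))"
    and A1: "0 \<le> A1" "\<And>x y. x \<in> Y \<Longrightarrow> y \<in> Y \<Longrightarrow> x \<noteq> y \<Longrightarrow> cmod (K1 x y) \<le> A1 * dist x y powr -s1"
    and A2: "0 \<le> A2" "\<And>x y. x \<in> Y \<Longrightarrow> y \<in> Y \<Longrightarrow> x \<noteq> y \<Longrightarrow> cmod (K2 x y) \<le> A2 * dist x y powr -s2"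
begin

lemma norm_product_le:
  assumes "x \<in> Y" "y \<in> Y" "t \<in> Y" "t \<noteq> x" "t \<noteq> y"
  shows "cmod (K1 x t * K2 t y) \<le> A1 * A2 * (dist x t powr -s1 * dist y t powr -s2)"
proof -
  have "cmod (K1 x t * K2 t y) \<le> (A1 * dist x t powr -s1) * (A2 * dist t y powr -s2)"
    unfolding norm_mult using assms A1 A2 by (intro mult_mono) auto
  then show ?thesis
    by (simp add: dist_commute mult_ac)
qed

lemma norm_product_le_away:
  assumes "x \<in> Y" "y \<in> Y" "t \<in> Y" "0 < \<eta>" "\<eta> \<le> dist x t" "\<eta> \<le> dist y t"
  shows "cmod (K1 x t * K2 t y) \<le> A1 * A2 * (\<eta> powr -s1 * \<eta> powr -s2)"
proof -
  have "cmod (K1 x t * K2 t y) \<le> A1 * A2 * (dist x t powr -s1 * dist y t powr -s2)"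
    using assms by (intro norm_product_le) auto
  also have "\<dots> \<le> A1 * A2 * (\<eta> powr -s1 * \<eta> powr -s2)"
    using assms s1 s2 A1 A2 by (intro mult_left_mono mult_mono powr_mono2') auto
  finally show ?thesis .
qed

lemma continuous_on_product_off:
  assumes "t \<in> Y"
  shows "continuous_on ((Y - {t}) \<times> (Y - {t})) (\<lambda>p. K1 (fst p) t * K2 t (snd p))"
proof (intro continuous_on_mult)
  have "continuous_on ((Y - {t}) \<times> (Y - {t})) (\<lambda>p. (\<lambda>q. K1 (fst q) (snd q)) (fst p, t))"
    by (rule continuous_on_compose2[OF K1_cont]) (use assms in \<open>auto simp: offdiag_def intro!: continuous_intros\<close>)
  then show "continuous_on ((Y - {t}) \<times> (Y - {t})) (\<lambda>p. K1 (fst p) t)"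
    by simp
  have "continuous_on ((Y - {t}) \<times> (Y - {t})) (\<lambda>p. (\<lambda>q. K2 (fst q) (snd q)) (t, snd p))"
    by (rule continuous_on_compose2[OF K2_cont]) (use assms in \<open>auto simp: offdiag_def intro!: continuous_intros\<close>)
  then show "continuous_on ((Y - {t}) \<times> (Y - {t})) (\<lambda>p. K2 t (snd p))"
    by simp
qed

lemma borel_measurable_product:
  assumes "x \<in> Y" "y \<in> Y"
  shows "(\<lambda>t. K1 x t * K2 t y) \<in> borel_measurable nu"
proof (intro borel_measurable_times borel_measurable_nu_if_continuous_on_punctured)
  have "continuous_on (Y - {x}) (\<lambda>t. (\<lambda>q. K1 (fst q) (snd q)) (x, t))"
    by (rule continuous_on_compose2[OF K1_cont]) (use assms in \<open>auto simp: offdiag_def intro!: continuous_intros\<close>)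
  then show "continuous_on (Y - {x}) (K1 x)"
    by simp
  have "continuous_on (Y - {y}) (\<lambda>t. (\<lambda>q. K2 (fst q) (snd q)) (t, y))"
    by (rule continuous_on_compose2[OF K2_cont]) (use assms in \<open>auto simp: offdiag_def intro!: continuous_intros\<close>)
  then show "continuous_on (Y - {y}) (\<lambda>t. K2 t y)"
    by simp
qed

lemma continuous_on_product_integral:
  assumes P: "P \<subseteq> Y \<times> Y"
    and int: "\<And>x y. (x, y) \<in> P \<Longrightarrow> integrable nu (\<lambda>t. K1 x t * K2 t y)"
    and small: "\<And>x0 y0 e. (x0, y0) \<in> P \<Longrightarrow> 0 < e \<Longrightarrow> \<exists>\<eta>>0. \<forall>x y. (x, y) \<in> P \<inter> ball (x0, y0) \<eta> \<longrightarrow>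
      (\<integral>\<^sup>+t\<in>ball x0 (2 * \<eta>) \<union> ball y0 (2 * \<eta>). ennreal (cmod (K1 x t * K2 t y)) \<partial>nu) \<le> ennreal e"
  shows "continuous_on P (\<lambda>p. LINT t|nu. K1 (fst p) t * K2 t (snd p))"
proof (rule continuous_on_integral_param[OF finite_measure_nu])
  show "integrable nu (\<lambda>t. K1 (fst p) t * K2 t (snd p))" if "p \<in> P" for p
    using int[of "fst p" "snd p"] that by simp
  fix p0 and e :: real assume p0: "p0 \<in> P" and e: "0 < e"
  obtain x0 y0 where p0_eq: "p0 = (x0, y0)"
    by (cases p0)
  obtain \<eta> where \<eta>: "0 < \<eta>" and near: "\<And>x y. (x, y) \<in> P \<inter> ball p0 \<eta> \<Longrightarrow>
      (\<integral>\<^sup>+t\<in>ball x0 (2 * \<eta>) \<union> ball y0 (2 * \<eta>). ennreal (cmod (K1 x t * K2 t y)) \<partial>nu) \<le> ennreal e"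
    using small[of x0 y0 e] p0 e unfolding p0_eq by blast
  define S where "S = (ball x0 (2 * \<eta>) \<union> ball y0 (2 * \<eta>)) \<inter> Y"
  have far: "x \<in> Y \<and> y \<in> Y \<and> t \<in> Y \<and> \<eta> \<le> dist x t \<and> \<eta> \<le> dist y t"
    if "(x, y) \<in> P \<inter> ball p0 \<eta>" "t \<in> space nu - S" for x y t
    using that P space_nu dist_ge_if_outside_double_balls[of x y x0 y0 \<eta> t] by (auto simp: S_def p0_eq)
  show "\<exists>\<delta>>0. \<exists>S\<in>sets nu. \<exists>B.
    (\<forall>p\<in>P \<inter> ball p0 \<delta>. (\<integral>\<^sup>+t\<in>S. ennreal (norm (K1 (fst p) t * K2 t (snd p))) \<partial>nu) \<le> ennreal e \<and>
      (\<forall>t\<in>space nu - S. norm (K1 (fst p) t * K2 t (snd p)) \<le> B)) \<and>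
    (\<forall>t\<in>space nu - S. continuous_on (P \<inter> ball p0 \<delta>) (\<lambda>p. K1 (fst p) t * K2 t (snd p)))"
  proof (rule exI[of _ \<eta>], intro conjI bexI[of _ S] exI[of _ "A1 * A2 * (\<eta> powr -s1 * \<eta> powr -s2)"] ballI \<eta>)
    show "S \<in> sets nu"
      unfolding S_def by (intro Int_Y_in_sets_nu) auto
  next
    fix p assume p: "p \<in> P \<inter> ball p0 \<eta>"
    have "(\<integral>\<^sup>+t\<in>S. ennreal (norm (K1 (fst p) t * K2 t (snd p))) \<partial>nu)
        \<le> (\<integral>\<^sup>+t\<in>ball x0 (2 * \<eta>) \<union> ball y0 (2 * \<eta>). ennreal (norm (K1 (fst p) t * K2 t (snd p))) \<partial>nu)"
      by (intro nn_set_integral_set_mono) (auto simp: S_def)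
    also have "\<dots> \<le> ennreal e"
      using near[of "fst p" "snd p"] p by simp
    finally show "(\<integral>\<^sup>+t\<in>S. ennreal (norm (K1 (fst p) t * K2 t (snd p))) \<partial>nu) \<le> ennreal e" .
  next
    fix p t assume "p \<in> P \<inter> ball p0 \<eta>" "t \<in> space nu - S"
    then show "norm (K1 (fst p) t * K2 t (snd p)) \<le> A1 * A2 * (\<eta> powr -s1 * \<eta> powr -s2)"
      using far[of "fst p" "snd p" t] \<eta> by (intro norm_product_le_away) auto
  next
    fix t assume t: "t \<in> space nu - S"
    have "P \<inter> ball p0 \<eta> \<subseteq> (Y - {t}) \<times> (Y - {t})"
    proof
      fix p assume p: "p \<in> P \<inter> ball p0 \<eta>"
      then show "p \<in> (Y - {t}) \<times> (Y - {t})"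
        using far[of "fst p" "snd p" t] t \<eta> by (cases p) auto
    qed
    then show "continuous_on (P \<inter> ball p0 \<eta>) (\<lambda>p. K1 (fst p) t * K2 t (snd p))"
      using t space_nu by (intro continuous_on_subset[OF continuous_on_product_off]) auto
  qed
qed

lemma product_nn_integral_bounded:
  assumes \<sigma>: "s1 + s2 < ups"
  obtains B where "0 \<le> B"
    "\<And>x y. x \<in> Y \<Longrightarrow> y \<in> Y \<Longrightarrow> (\<integral>\<^sup>+t. ennreal (cmod (K1 x t * K2 t y)) \<partial>nu) \<le> ennreal B"
proof -
  obtain G where G: "0 \<le> G"
    and bounded: "\<And>x. x \<in> Y \<Longrightarrow> (\<integral>\<^sup>+t. ennreal (dist x t powr -(s1 + s2)) \<partial>nu) \<le> ennreal G"
    using nn_integral_dist_powr_bounded[of "s1 + s2"] s1 s2 \<sigma> by auto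
  have AA: "0 \<le> A1 * A2"
    using A1 A2 by simp
  have "(\<integral>\<^sup>+t. ennreal (cmod (K1 x t * K2 t y)) \<partial>nu) \<le> ennreal (2 * (A1 * A2 * G))"
    if x: "x \<in> Y" and y: "y \<in> Y" for x y
  proof -
    have "(\<integral>\<^sup>+t\<in>UNIV. ennreal (cmod (K1 x t * K2 t y)) \<partial>nu)
      \<le> ennreal (A1 * A2) * (\<integral>\<^sup>+t\<in>UNIV. ennreal (dist x t powr -(s1 + s2)) \<partial>nu)
        + ennreal (A1 * A2) * (\<integral>\<^sup>+t\<in>UNIV. ennreal (dist y t powr -(s1 + s2)) \<partial>nu)
        + ennreal 0 * (\<integral>\<^sup>+t\<in>{}. ennreal (dist x t powr -0) \<partial>nu)"
    proof (rule set_nn_integral_le_potentials[OF x y])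
      fix t assume t: "t \<in> UNIV \<inter> Y" "t \<noteq> x" "t \<noteq> y"
      have "cmod (K1 x t * K2 t y) \<le> A1 * A2 * (dist x t powr -s1 * dist y t powr -s2)"
        using norm_product_le[OF x y] t by simp
      also have "\<dots> \<le> A1 * A2 * (dist x t powr -(s1 + s2) + dist y t powr -(s1 + s2))"
      proof (intro mult_left_mono AA)
        have "dist x t powr -s1 * dist y t powr -s2 \<le> min (dist x t) (dist y t) powr -(s1 + s2)"
          using t s1 s2 by (intro powr_mult_le_min_powr) auto
        also have "\<dots> \<le> dist x t powr -(s1 + s2) + dist y t powr -(s1 + s2)"
          by (simp add: min_def)
        finally show "dist x t powr -s1 * dist y t powr -s2 \<le> dist x t powr -(s1 + s2) + dist y t powr -(s1 + s2)" .
      qed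
      finally show "cmod (K1 x t * K2 t y) \<le> A1 * A2 * (dist x t powr -(s1 + s2) * indicator UNIV t)
        + A1 * A2 * (dist y t powr -(s1 + s2) * indicator UNIV t) + 0 * (dist x t powr -0 * indicator {} t)"
        by (simp add: algebra_simps)
    qed (use AA in auto)
    also have "\<dots> \<le> ennreal (A1 * A2) * ennreal G + ennreal (A1 * A2) * ennreal G"
      using bounded x y by (simp add: add_mono mult_left_mono)
    also have "\<dots> = ennreal (A1 * A2 * G + A1 * A2 * G)"
      using AA G by (simp add: ennreal_mult'[symmetric] ennreal_plus[symmetric] del: ennreal_plus)
    finally show ?thesis
      by (simp add: mult_ac)
  qed
  moreover have "0 \<le> 2 * (A1 * A2 * G)"
    using AA G by simp
  ultimately show thesis
    using that by blast
qed

lemma product_integrable_bounded: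
  assumes "s1 + s2 < ups"
  obtains B where "\<And>x y. x \<in> Y \<Longrightarrow> y \<in> Y \<Longrightarrow>
    integrable nu (\<lambda>t. K1 x t * K2 t y) \<and> cmod (LINT t|nu. K1 x t * K2 t y) \<le> B"
proof -
  obtain B where B: "0 \<le> B"
    "\<And>x y. x \<in> Y \<Longrightarrow> y \<in> Y \<Longrightarrow> (\<integral>\<^sup>+t. ennreal (cmod (K1 x t * K2 t y)) \<partial>nu) \<le> ennreal B"
    using product_nn_integral_bounded[OF assms] by blast
  show thesis
    by (rule that, rule integrable_norm_integral_le[OF borel_measurable_product B(2) B(1)])
qed

lemma integrable_product:
  assumes "s1 + s2 < ups" "x \<in> Y" "y \<in> Y"
  shows "integrable nu (\<lambda>t. K1 x t * K2 t y)"
proof -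
  obtain B where bound: "\<And>x y. x \<in> Y \<Longrightarrow> y \<in> Y \<Longrightarrow>
      integrable nu (\<lambda>t. K1 x t * K2 t y) \<and> cmod (LINT t|nu. K1 x t * K2 t y) \<le> B"
    using product_integrable_bounded[OF assms(1)] by blast
  show ?thesis
    using bound[OF assms(2,3)] by (rule conjunct1)
qed

lemma product_integral_diag_bound:
  assumes "s1 + s2 < ups"
  shows "\<exists>C. \<forall>x\<in>Y. \<forall>y\<in>Y. cmod (LINT t|nu. K1 x t * K2 t y) / (1 + dist x y powr (ups - (s1 + s2))) \<le> C"
proof -
  obtain B where B: "\<And>x y. x \<in> Y \<Longrightarrow> y \<in> Y \<Longrightarrow>
      integrable nu (\<lambda>t. K1 x t * K2 t y) \<and> cmod (LINT t|nu. K1 x t * K2 t y) \<le> B"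
    using product_integrable_bounded[OF assms] by blast
  show ?thesis
  proof (intro exI[of _ B] ballI)
    fix x y assume "x \<in> Y" "y \<in> Y"
    have "cmod (LINT t|nu. K1 x t * K2 t y) / (1 + dist x y powr (ups - (s1 + s2)))
        \<le> cmod (LINT t|nu. K1 x t * K2 t y) / 1"
      by (intro divide_left_mono) (simp_all add: add_pos_nonneg)
    then show "cmod (LINT t|nu. K1 x t * K2 t y) / (1 + dist x y powr (ups - (s1 + s2))) \<le> B"
      using B[OF \<open>x \<in> Y\<close> \<open>y \<in> Y\<close>] by simp
  qed
qed

lemma set_nn_integral_product_near_le:
  assumes \<sigma>: "s1 + s2 < ups"
  obtains C where "0 \<le> C" "\<And>x y r S. x \<in> Y \<Longrightarrow> y \<in> Y \<Longrightarrow> 0 < r \<Longrightarrow>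
    (\<And>t. t \<in> S \<Longrightarrow> min (dist x t) (dist y t) < r) \<Longrightarrow>
    (\<integral>\<^sup>+t\<in>S. ennreal (cmod (K1 x t * K2 t y)) \<partial>nu) \<le> ennreal (C * r powr (ups - (s1 + s2)))"
proof -
  obtain C where C: "0 \<le> C" "\<And>x \<rho>. x \<in> Y \<Longrightarrow> 0 < \<rho> \<Longrightarrow>
      (\<integral>\<^sup>+t\<in>ball x \<rho>. ennreal (dist x t powr -(s1 + s2)) \<partial>nu) \<le> ennreal (C * \<rho> powr (ups - (s1 + s2)))"
    using set_nn_integral_ball_dist_powr_le[of "s1 + s2"] s1 s2 \<sigma> by auto
  have AA: "0 \<le> A1 * A2"
    using A1 A2 by simp
  define K where "K = 2 * (A1 * A2 * C)"
  have "(\<integral>\<^sup>+t\<in>S. ennreal (cmod (K1 x t * K2 t y)) \<partial>nu) \<le> ennreal (K * r powr (ups - (s1 + s2)))"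
    if x: "x \<in> Y" and y: "y \<in> Y" and r: "0 < r" and near: "\<And>t. t \<in> S \<Longrightarrow> min (dist x t) (dist y t) < r"
    for x y r S
  proof -
    have "(\<integral>\<^sup>+t\<in>S. ennreal (cmod (K1 x t * K2 t y)) \<partial>nu)
      \<le> ennreal (A1 * A2) * (\<integral>\<^sup>+t\<in>ball x r. ennreal (dist x t powr -(s1 + s2)) \<partial>nu)
        + ennreal (A1 * A2) * (\<integral>\<^sup>+t\<in>ball y r. ennreal (dist y t powr -(s1 + s2)) \<partial>nu)
        + ennreal 0 * (\<integral>\<^sup>+t\<in>{}. ennreal (dist x t powr -0) \<partial>nu)"
    proof (rule set_nn_integral_le_potentials[OF x y])
      fix t assume t: "t \<in> S \<inter> Y" "t \<noteq> x" "t \<noteq> y"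
      have "dist x t powr -s1 * dist y t powr -s2 \<le> (if dist x t < r then dist x t powr -(s1 + s2) else 0)
          + (if dist y t < r then dist y t powr -(s1 + s2) else 0)"
        using t s1 s2 near[of t] by (intro powr_mult_le_near_powr) auto
      then have "cmod (K1 x t * K2 t y) \<le> A1 * A2 * ((if dist x t < r then dist x t powr -(s1 + s2) else 0)
          + (if dist y t < r then dist y t powr -(s1 + s2) else 0))"
        using norm_product_le[OF x y, of t] t AA by (meson IntD2 mult_left_mono order_trans)
      then show "cmod (K1 x t * K2 t y) \<le> A1 * A2 * (dist x t powr -(s1 + s2) * indicator (ball x r) t)
          + A1 * A2 * (dist y t powr -(s1 + s2) * indicator (ball y r) t) + 0 * (dist x t powr -0 * indicator {} t)"
        by (auto simp: algebra_simps indicator_def split: if_splits)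
    qed (use AA in auto)
    also have "\<dots> \<le> ennreal (A1 * A2) * ennreal (C * r powr (ups - (s1 + s2)))
        + ennreal (A1 * A2) * ennreal (C * r powr (ups - (s1 + s2)))"
      using C(2)[OF x r] C(2)[OF y r] by (simp add: add_mono mult_left_mono)
    also have "\<dots> = ennreal (K * r powr (ups - (s1 + s2)))"
    proof -
      have "0 \<le> A1 * A2 * (C * r powr (ups - (s1 + s2)))"
        using AA C(1) by simp
      then show ?thesis
        using AA by (simp add: K_def ennreal_mult'[symmetric] ennreal_plus[symmetric] algebra_simps
            del: ennreal_plus)
    qed
    finally show ?thesis .
  qed
  moreover have "0 \<le> K"
    using AA C(1) by (simp add: K_def)
  ultimately show thesis
    using that by blast
qed

lemma continuous_on_product_integral_diag:
  assumes \<sigma>: "s1 + s2 < ups"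
  shows "continuous_on (Y \<times> Y) (\<lambda>p. LINT t|nu. K1 (fst p) t * K2 t (snd p))"
proof (rule continuous_on_product_integral)
  show "integrable nu (\<lambda>t. K1 x t * K2 t y)" if "(x, y) \<in> Y \<times> Y" for x y
    using integrable_product[OF \<sigma>] that by simp
  obtain C where "0 \<le> C" and near: "\<And>x y r S. x \<in> Y \<Longrightarrow> y \<in> Y \<Longrightarrow> 0 < r \<Longrightarrow>
      (\<And>t. t \<in> S \<Longrightarrow> min (dist x t) (dist y t) < r) \<Longrightarrow>
      (\<integral>\<^sup>+t\<in>S. ennreal (cmod (K1 x t * K2 t y)) \<partial>nu) \<le> ennreal (C * r powr (ups - (s1 + s2)))"
    by (rule set_nn_integral_product_near_le[OF \<sigma>]) iprover
  fix x0 y0 and e :: real assume e: "0 < e"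
  obtain \<eta>' where \<eta>': "0 < \<eta>'" "\<And>r. 0 < r \<and> r \<le> \<eta>' \<Longrightarrow> C * r powr (ups - (s1 + s2)) \<le> e"
    using small_radius_powr_le[OF e, of "ups - (s1 + s2)"] \<sigma> by auto
  define \<eta> where "\<eta> = \<eta>' / 3"
  have \<eta>: "0 < \<eta>" "3 * \<eta> = \<eta>'"
    using \<eta>'(1) by (simp_all add: \<eta>_def)
  show "\<exists>\<eta>>0. \<forall>x y. (x, y) \<in> Y \<times> Y \<inter> ball (x0, y0) \<eta> \<longrightarrow>
    (\<integral>\<^sup>+t\<in>ball x0 (2 * \<eta>) \<union> ball y0 (2 * \<eta>). ennreal (cmod (K1 x t * K2 t y)) \<partial>nu) \<le> ennreal e"
  proof (intro exI[of _ \<eta>] conjI allI impI \<eta>(1))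
    fix x y assume xy: "(x, y) \<in> Y \<times> Y \<inter> ball (x0, y0) \<eta>"
    then have "dist x0 x < \<eta>" "dist y0 y < \<eta>"
      using dist_lt_of_mem_ball_pair by auto
    then have "min (dist x t) (dist y t) < 3 * \<eta>" if "t \<in> ball x0 (2 * \<eta>) \<union> ball y0 (2 * \<eta>)" for t
      using that dist_triangle[of x t x0] dist_triangle[of y t y0] by (auto simp: dist_commute)
    then have "(\<integral>\<^sup>+t\<in>ball x0 (2 * \<eta>) \<union> ball y0 (2 * \<eta>). ennreal (cmod (K1 x t * K2 t y)) \<partial>nu)
        \<le> ennreal (C * (3 * \<eta>) powr (ups - (s1 + s2)))"
      using xy \<eta>(1) by (intro near) auto
    also have "\<dots> \<le> ennreal e"
      using \<eta>'(2)[of "3 * \<eta>"] \<eta> by (intro ennreal_leI) auto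
    finally show "(\<integral>\<^sup>+t\<in>ball x0 (2 * \<eta>) \<union> ball y0 (2 * \<eta>). ennreal (cmod (K1 x t * K2 t y)) \<partial>nu)
        \<le> ennreal e" .
  qed
qed simp

lemma product_nn_integral_le_near_far:
  assumes x: "x \<in> Y" and y: "y \<in> Y" and xy: "x \<noteq> y"
  defines "d \<equiv> dist x y"
  shows "(\<integral>\<^sup>+t. ennreal (cmod (K1 x t * K2 t y)) \<partial>nu)
    \<le> ennreal (A1 * A2 * (d/2) powr -s2) * (\<integral>\<^sup>+t\<in>ball x (d/2). ennreal (dist x t powr -s1) \<partial>nu)
      + ennreal (A1 * A2 * (d/2) powr -s1) * (\<integral>\<^sup>+t\<in>ball y (d/2). ennreal (dist y t powr -s2) \<partial>nu)
      + ennreal (A1 * A2 * 3 powr s2) * (\<integral>\<^sup>+t\<in>-ball x (d/2). ennreal (dist x t powr -(s1 + s2)) \<partial>nu)"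
proof -
  have AA: "0 \<le> A1 * A2"
    using A1 A2 by simp
  have d: "0 < d"
    using xy by (simp add: d_def)
  have "(\<integral>\<^sup>+t\<in>UNIV. ennreal (cmod (K1 x t * K2 t y)) \<partial>nu)
    \<le> ennreal (A1 * A2 * (d/2) powr -s2) * (\<integral>\<^sup>+t\<in>ball x (d/2). ennreal (dist x t powr -s1) \<partial>nu)
      + ennreal (A1 * A2 * (d/2) powr -s1) * (\<integral>\<^sup>+t\<in>ball y (d/2). ennreal (dist y t powr -s2) \<partial>nu)
      + ennreal (A1 * A2 * 3 powr s2) * (\<integral>\<^sup>+t\<in>-ball x (d/2). ennreal (dist x t powr -(s1 + s2)) \<partial>nu)"
  proof (rule set_nn_integral_le_potentials[OF x y])
    fix t assume t: "t \<in> UNIV \<inter> Y" "t \<noteq> x" "t \<noteq> y"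
    have "d \<le> dist x t + dist y t" "dist x t \<le> dist y t + d"
      unfolding d_def using dist_triangle[of x y t] dist_triangle[of x t y] by (simp_all add: dist_commute)
    then have "dist x t powr -s1 * dist y t powr -s2
      \<le> (if dist x t < d/2 then (d/2) powr -s2 * dist x t powr -s1 else 0)
        + (if dist y t < d/2 then (d/2) powr -s1 * dist y t powr -s2 else 0)
        + (if d/2 \<le> dist x t then 3 powr s2 * dist x t powr -(s1 + s2) else 0)"
      using t s1 s2 d by (intro powr_mult_le_near_far) auto
    then have "cmod (K1 x t * K2 t y) \<le> A1 * A2 * ((if dist x t < d/2 then (d/2) powr -s2 * dist x t powr -s1 else 0)
        + (if dist y t < d/2 then (d/2) powr -s1 * dist y t powr -s2 else 0)
        + (if d/2 \<le> dist x t then 3 powr s2 * dist x t powr -(s1 + s2) else 0))"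
      using norm_product_le[OF x y, of t] t AA by (meson IntD2 mult_left_mono order_trans)
    then show "cmod (K1 x t * K2 t y)
      \<le> A1 * A2 * (d/2) powr -s2 * (dist x t powr -s1 * indicator (ball x (d/2)) t)
        + A1 * A2 * (d/2) powr -s1 * (dist y t powr -s2 * indicator (ball y (d/2)) t)
        + A1 * A2 * 3 powr s2 * (dist x t powr -(s1 + s2) * indicator (-ball x (d/2)) t)"
      by (auto simp: algebra_simps indicator_def not_less split: if_splits)
  qed (use AA in auto)
  then show ?thesis
    by simp
qed

lemma product_integral_offdiag_le:
  assumes outer: "\<And>x \<rho>. x \<in> Y \<Longrightarrow> 0 < \<rho> \<Longrightarrow>
      (\<integral>\<^sup>+t\<in>-ball x \<rho>. ennreal (dist x t powr -(s1 + s2)) \<partial>nu) \<le> ennreal (\<Phi> \<rho>)"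
    and \<Phi>: "\<And>\<rho>. 0 < \<rho> \<Longrightarrow> 0 \<le> \<Phi> \<rho>"
  obtains C where "0 \<le> C" "\<And>x y. x \<in> Y \<Longrightarrow> y \<in> Y \<Longrightarrow> x \<noteq> y \<Longrightarrow>
    integrable nu (\<lambda>t. K1 x t * K2 t y) \<and>
    cmod (LINT t|nu. K1 x t * K2 t y) \<le> C * ((dist x y / 2) powr (ups - (s1 + s2)) + \<Phi> (dist x y / 2))"
proof -
  obtain C1 where C1: "0 \<le> C1" "\<And>x \<rho>. x \<in> Y \<Longrightarrow> 0 < \<rho> \<Longrightarrow>
      (\<integral>\<^sup>+t\<in>ball x \<rho>. ennreal (dist x t powr -s1) \<partial>nu) \<le> ennreal (C1 * \<rho> powr (ups - s1))"
    using set_nn_integral_ball_dist_powr_le[OF s1] by blast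
  obtain C2 where C2: "0 \<le> C2" "\<And>x \<rho>. x \<in> Y \<Longrightarrow> 0 < \<rho> \<Longrightarrow>
      (\<integral>\<^sup>+t\<in>ball x \<rho>. ennreal (dist x t powr -s2) \<partial>nu) \<le> ennreal (C2 * \<rho> powr (ups - s2))"
    using set_nn_integral_ball_dist_powr_le[OF s2] by blast
  have AA: "0 \<le> A1 * A2"
    using A1 A2 by simp
  define C where "C = A1 * A2 * (C1 + C2 + 3 powr s2)"
  have C: "0 \<le> C"
    using AA C1 C2 by (simp add: C_def)
  have "integrable nu (\<lambda>t. K1 x t * K2 t y) \<and>
    cmod (LINT t|nu. K1 x t * K2 t y) \<le> C * ((dist x y / 2) powr (ups - (s1 + s2)) + \<Phi> (dist x y / 2))"
    if x: "x \<in> Y" and y: "y \<in> Y" and xy: "x \<noteq> y" for x y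
  proof (rule integrable_norm_integral_le[OF borel_measurable_product[OF x y]])
    define r where "r = dist x y / 2"
    have r: "0 < r"
      using xy by (simp add: r_def)
    have inner1: "r powr -s2 * (C1 * r powr (ups - s1)) = C1 * r powr (ups - (s1 + s2))"
      and inner2: "r powr -s1 * (C2 * r powr (ups - s2)) = C2 * r powr (ups - (s1 + s2))"
      by (simp_all add: powr_add[symmetric] algebra_simps)
    have "(\<integral>\<^sup>+t. ennreal (cmod (K1 x t * K2 t y)) \<partial>nu)
      \<le> ennreal (A1 * A2 * r powr -s2) * ennreal (C1 * r powr (ups - s1))
        + ennreal (A1 * A2 * r powr -s1) * ennreal (C2 * r powr (ups - s2))
        + ennreal (A1 * A2 * 3 powr s2) * ennreal (\<Phi> r)"
      using product_nn_integral_le_near_far[OF x y xy] C1(2)[OF x r] C2(2)[OF y r] outer[OF x r]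
      unfolding r_def[symmetric] by (elim order_trans) (intro add_mono mult_left_mono; simp)
    also have "\<dots> = ennreal (A1 * A2 * (C1 + C2) * r powr (ups - (s1 + s2)) + A1 * A2 * 3 powr s2 * \<Phi> r)"
      using A1(1) A2(1) C1(1) C2(1) \<Phi>[OF r]
      by (simp add: ennreal_mult'[symmetric] ennreal_plus[symmetric] mult.assoc inner1 inner2
          distrib_left distrib_right del: ennreal_plus)
    also have "\<dots> \<le> ennreal (C * (r powr (ups - (s1 + s2)) + \<Phi> r))"
      using A1(1) A2(1) C1(1) C2(1) \<Phi>[OF r]
      by (intro ennreal_leI) (simp add: C_def algebra_simps add_mono mult_left_mono)
    finally show "(\<integral>\<^sup>+t. ennreal (norm (K1 x t * K2 t y)) \<partial>nu)
      \<le> ennreal (C * ((dist x y / 2) powr (ups - (s1 + s2)) + \<Phi> (dist x y / 2)))"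
      by (simp add: r_def)
    show "0 \<le> C * ((dist x y / 2) powr (ups - (s1 + s2)) + \<Phi> (dist x y / 2))"
      using C \<Phi>[OF r] by (simp add: r_def)
  qed
  with C show thesis
    using that by blast
qed

lemma product_integral_offdiag_bound_gt:
  assumes \<sigma>: "ups < s1 + s2"
  shows "\<exists>C. \<forall>x\<in>Y. \<forall>y\<in>Y. x \<noteq> y \<longrightarrow>
    cmod (LINT t|nu. K1 x t * K2 t y) * dist x y powr (s1 + s2 - ups) \<le> C"
proof -
  obtain Ct where Ct: "0 \<le> Ct" "\<And>x \<rho>. x \<in> Y \<Longrightarrow> 0 < \<rho> \<Longrightarrow>
      (\<integral>\<^sup>+t\<in>-ball x \<rho>. ennreal (dist x t powr -(s1 + s2)) \<partial>nu) \<le> ennreal (Ct * \<rho> powr (ups - (s1 + s2)))"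
    using set_nn_integral_outside_ball_dist_powr_le[OF \<sigma>] by blast
  obtain C where C: "0 \<le> C" and bound: "\<And>x y. x \<in> Y \<Longrightarrow> y \<in> Y \<Longrightarrow> x \<noteq> y \<Longrightarrow>
      integrable nu (\<lambda>t. K1 x t * K2 t y) \<and> cmod (LINT t|nu. K1 x t * K2 t y)
        \<le> C * ((dist x y / 2) powr (ups - (s1 + s2)) + Ct * (dist x y / 2) powr (ups - (s1 + s2)))"
    using product_integral_offdiag_le[OF Ct(2)] Ct(1) by auto
  show ?thesis
  proof (intro exI[of _ "C * (1 + Ct) * 2 powr (s1 + s2 - ups)"] ballI impI)
    fix x y assume xy: "x \<in> Y" "y \<in> Y" "x \<noteq> y"
    define d where "d = dist x y"
    have d: "0 < d"
      using xy by (simp add: d_def)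
    have "cmod (LINT t|nu. K1 x t * K2 t y) \<le> C * (1 + Ct) * (d / 2) powr (ups - (s1 + s2))"
      using bound[OF xy] by (simp add: d_def algebra_simps)
    then have "cmod (LINT t|nu. K1 x t * K2 t y) * d powr (s1 + s2 - ups)
        \<le> C * (1 + Ct) * ((d / 2) powr (ups - (s1 + s2)) * d powr (s1 + s2 - ups))"
      unfolding mult.assoc[symmetric] by (rule mult_right_mono) simp_all
    also have "(d / 2) powr (ups - (s1 + s2)) * d powr (s1 + s2 - ups) = 2 powr (s1 + s2 - ups)"
      using d by (simp add: powr_divide powr_add[symmetric] powr_minus_divide[symmetric] powr_minus)
    finally show "cmod (LINT t|nu. K1 x t * K2 t y) * dist x y powr (s1 + s2 - ups) \<le> C * (1 + Ct) * 2 powr (s1 + s2 - ups)"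
      by (simp add: d_def)
  qed
qed

lemma product_integral_offdiag_bound_log:
  assumes \<sigma>: "s1 + s2 = ups"
  shows "\<exists>C. \<forall>x\<in>Y. \<forall>y\<in>Y. x \<noteq> y \<longrightarrow>
    cmod (LINT t|nu. K1 x t * K2 t y) / (1 + \<bar>ln (dist x y)\<bar>) \<le> C"
proof -
  obtain Ce where Ce: "0 \<le> Ce" "\<And>x \<rho>. x \<in> Y \<Longrightarrow> 0 < \<rho> \<Longrightarrow>
      (\<integral>\<^sup>+t\<in>-ball x \<rho>. ennreal (dist x t powr -(s1 + s2)) \<partial>nu) \<le> ennreal (Ce * (1 + \<bar>ln \<rho>\<bar>))"
    using set_nn_integral_outside_ball_dist_powr_le_log \<sigma> by blast
  obtain C where C: "0 \<le> C" and bound: "\<And>x y. x \<in> Y \<Longrightarrow> y \<in> Y \<Longrightarrow> x \<noteq> y \<Longrightarrow>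
      integrable nu (\<lambda>t. K1 x t * K2 t y) \<and> cmod (LINT t|nu. K1 x t * K2 t y)
        \<le> C * ((dist x y / 2) powr (ups - (s1 + s2)) + Ce * (1 + \<bar>ln (dist x y / 2)\<bar>))"
    using product_integral_offdiag_le[OF Ce(2)] Ce(1) by auto
  show ?thesis
  proof (intro exI[of _ "C * (1 + Ce * (1 + ln 2))"] ballI impI)
    fix x y assume xy: "x \<in> Y" "y \<in> Y" "x \<noteq> y"
    define d where "d = dist x y"
    have d: "0 < d"
      using xy by (simp add: d_def)
    have "cmod (LINT t|nu. K1 x t * K2 t y) \<le> C * (1 + Ce * (1 + \<bar>ln (d / 2)\<bar>))"
      using bound[OF xy] d \<sigma> by (simp add: d_def)
    also have "\<dots> \<le> C * (1 + Ce * ((1 + ln 2) * (1 + \<bar>ln d\<bar>)))"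
      using one_plus_abs_ln_half_le[OF d] C Ce(1) by (intro mult_left_mono add_left_mono) auto
    also have "\<dots> \<le> C * (1 + Ce * (1 + ln 2)) * (1 + \<bar>ln d\<bar>)"
      using C Ce(1) by (simp add: algebra_simps)
    finally show "cmod (LINT t|nu. K1 x t * K2 t y) / (1 + \<bar>ln (dist x y)\<bar>) \<le> C * (1 + Ce * (1 + ln 2))"
      by (simp add: d_def divide_le_eq add_pos_nonneg)
  qed
qed

lemma integrable_product_offdiag:
  assumes \<sigma>: "ups \<le> s1 + s2" and xy: "x \<in> Y" "y \<in> Y" "x \<noteq> y"
  shows "integrable nu (\<lambda>t. K1 x t * K2 t y)"
proof -
  obtain \<Phi> where outer: "\<And>z \<rho>. z \<in> Y \<Longrightarrow> 0 < \<rho> \<Longrightarrow>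
      (\<integral>\<^sup>+t\<in>-ball z \<rho>. ennreal (dist z t powr -(s1 + s2)) \<partial>nu) \<le> ennreal (\<Phi> \<rho>)"
    and nonneg: "\<And>\<rho>. 0 < \<rho> \<Longrightarrow> 0 \<le> \<Phi> \<rho>"
  proof (cases "ups < s1 + s2")
    case True
    then obtain Ct where "0 \<le> Ct" "\<And>z \<rho>. z \<in> Y \<Longrightarrow> 0 < \<rho> \<Longrightarrow>
      (\<integral>\<^sup>+t\<in>-ball z \<rho>. ennreal (dist z t powr -(s1 + s2)) \<partial>nu) \<le> ennreal (Ct * \<rho> powr (ups - (s1 + s2)))"
      using set_nn_integral_outside_ball_dist_powr_le by blast
    then show thesis
      using that[of "\<lambda>\<rho>. Ct * \<rho> powr (ups - (s1 + s2))"] by simp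
  next
    case False
    then have "s1 + s2 = ups"
      using \<sigma> by simp
    moreover obtain Ce where "0 \<le> Ce" "\<And>z \<rho>. z \<in> Y \<Longrightarrow> 0 < \<rho> \<Longrightarrow>
      (\<integral>\<^sup>+t\<in>-ball z \<rho>. ennreal (dist z t powr -ups) \<partial>nu) \<le> ennreal (Ce * (1 + \<bar>ln \<rho>\<bar>))"
      using set_nn_integral_outside_ball_dist_powr_le_log by blast
    ultimately show thesis
      using that[of "\<lambda>\<rho>. Ce * (1 + \<bar>ln \<rho>\<bar>)"] by simp
  qed
  obtain C where "0 \<le> C" and bound: "\<And>x y. x \<in> Y \<Longrightarrow> y \<in> Y \<Longrightarrow> x \<noteq> y \<Longrightarrow>
      integrable nu (\<lambda>t. K1 x t * K2 t y) \<and>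
      cmod (LINT t|nu. K1 x t * K2 t y) \<le> C * ((dist x y / 2) powr (ups - (s1 + s2)) + \<Phi> (dist x y / 2))"
    using product_integral_offdiag_le[OF outer nonneg] by blast
  show ?thesis
    using bound[OF xy] by (rule conjunct1)
qed

lemma set_nn_integral_product_separated_le:
  obtains C where "0 \<le> C" "\<And>x y r D S. x \<in> Y \<Longrightarrow> y \<in> Y \<Longrightarrow> 0 < r \<Longrightarrow> 0 < D \<Longrightarrow>
    (\<And>t. t \<in> S \<Longrightarrow> (dist x t < r \<and> D \<le> dist y t) \<or> (dist y t < r \<and> D \<le> dist x t)) \<Longrightarrow>
    (\<integral>\<^sup>+t\<in>S. ennreal (cmod (K1 x t * K2 t y)) \<partial>nu)
      \<le> ennreal (C * (D powr -s2 * r powr (ups - s1) + D powr -s1 * r powr (ups - s2)))"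
proof -
  obtain C1 where C1: "0 \<le> C1" "\<And>x \<rho>. x \<in> Y \<Longrightarrow> 0 < \<rho> \<Longrightarrow>
      (\<integral>\<^sup>+t\<in>ball x \<rho>. ennreal (dist x t powr -s1) \<partial>nu) \<le> ennreal (C1 * \<rho> powr (ups - s1))"
    using set_nn_integral_ball_dist_powr_le[OF s1] by blast
  obtain C2 where C2: "0 \<le> C2" "\<And>x \<rho>. x \<in> Y \<Longrightarrow> 0 < \<rho> \<Longrightarrow>
      (\<integral>\<^sup>+t\<in>ball x \<rho>. ennreal (dist x t powr -s2) \<partial>nu) \<le> ennreal (C2 * \<rho> powr (ups - s2))"
    using set_nn_integral_ball_dist_powr_le[OF s2] by blast
  define C where "C = A1 * A2 * (C1 + C2)"
  have "(\<integral>\<^sup>+t\<in>S. ennreal (cmod (K1 x t * K2 t y)) \<partial>nu)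
      \<le> ennreal (C * (D powr -s2 * r powr (ups - s1) + D powr -s1 * r powr (ups - s2)))"
    if x: "x \<in> Y" and y: "y \<in> Y" and r: "0 < r" and D: "0 < D"
      and separated: "\<And>t. t \<in> S \<Longrightarrow> (dist x t < r \<and> D \<le> dist y t) \<or> (dist y t < r \<and> D \<le> dist x t)"
    for x y r D S
  proof -
    define a1 a2 where "a1 = A1 * A2 * D powr -s2" and "a2 = A1 * A2 * D powr -s1"
    have a: "0 \<le> a1" "0 \<le> a2"
      using A1 A2 by (simp_all add: a1_def a2_def)
    have "(\<integral>\<^sup>+t\<in>S. ennreal (cmod (K1 x t * K2 t y)) \<partial>nu)
      \<le> ennreal a1 * (\<integral>\<^sup>+t\<in>ball x r. ennreal (dist x t powr -s1) \<partial>nu)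
        + ennreal a2 * (\<integral>\<^sup>+t\<in>ball y r. ennreal (dist y t powr -s2) \<partial>nu)
        + ennreal 0 * (\<integral>\<^sup>+t\<in>{}. ennreal (dist x t powr -0) \<partial>nu)"
    proof (rule set_nn_integral_le_potentials[OF x y])
      fix t assume t: "t \<in> S \<inter> Y" "t \<noteq> x" "t \<noteq> y"
      have "dist x t powr -s1 * dist y t powr -s2
        \<le> D powr -s2 * (if dist x t < r then dist x t powr -s1 else 0)
          + D powr -s1 * (if dist y t < r then dist y t powr -s2 else 0)"
        using t s1 s2 D separated[of t] by (intro powr_mult_le_separated) auto
      then have "cmod (K1 x t * K2 t y) \<le> A1 * A2 * (D powr -s2 * (if dist x t < r then dist x t powr -s1 else 0)
          + D powr -s1 * (if dist y t < r then dist y t powr -s2 else 0))"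
        using norm_product_le[OF x y, of t] t A1 A2 by (meson IntD2 mult_left_mono order_trans zero_le_mult_iff)
      then show "cmod (K1 x t * K2 t y) \<le> a1 * (dist x t powr -s1 * indicator (ball x r) t)
          + a2 * (dist y t powr -s2 * indicator (ball y r) t) + 0 * (dist x t powr -0 * indicator {} t)"
        by (auto simp: a1_def a2_def algebra_simps indicator_def split: if_splits)
    qed (use a in auto)
    also have "\<dots> \<le> ennreal a1 * ennreal (C1 * r powr (ups - s1)) + ennreal a2 * ennreal (C2 * r powr (ups - s2))"
      using C1(2)[OF x r] C2(2)[OF y r] by (simp add: add_mono mult_left_mono)
    also have "\<dots> = ennreal (a1 * C1 * r powr (ups - s1) + a2 * C2 * r powr (ups - s2))"
      using a C1(1) C2(1) by (simp add: ennreal_mult'[symmetric] ennreal_plus[symmetric] mult.assoc del: ennreal_plus)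
    also have "\<dots> \<le> ennreal (C * (D powr -s2 * r powr (ups - s1) + D powr -s1 * r powr (ups - s2)))"
      using A1(1) A2(1) C1(1) C2(1)
      by (intro ennreal_leI) (simp add: a1_def a2_def C_def algebra_simps add_mono mult_left_mono)
    finally show ?thesis .
  qed
  moreover have "0 \<le> C"
    using A1(1) A2(1) C1(1) C2(1) by (simp add: C_def)
  ultimately show thesis
    using that by blast
qed

lemma continuous_on_product_integral_offdiag:
  assumes \<sigma>: "ups \<le> s1 + s2"
  shows "continuous_on (offdiag Y) (\<lambda>p. LINT t|nu. K1 (fst p) t * K2 t (snd p))"
proof (rule continuous_on_product_integral)
  show "offdiag Y \<subseteq> Y \<times> Y"
    by (auto simp: offdiag_def)
  show "integrable nu (\<lambda>t. K1 x t * K2 t y)" if "(x, y) \<in> offdiag Y" for x y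
    using integrable_product_offdiag[OF \<sigma>] that by (auto simp: offdiag_def)
  obtain C where C: "0 \<le> C" and separated_le: "\<And>x y r D S. x \<in> Y \<Longrightarrow> y \<in> Y \<Longrightarrow> 0 < r \<Longrightarrow> 0 < D \<Longrightarrow>
      (\<And>t. t \<in> S \<Longrightarrow> (dist x t < r \<and> D \<le> dist y t) \<or> (dist y t < r \<and> D \<le> dist x t)) \<Longrightarrow>
      (\<integral>\<^sup>+t\<in>S. ennreal (cmod (K1 x t * K2 t y)) \<partial>nu)
        \<le> ennreal (C * (D powr -s2 * r powr (ups - s1) + D powr -s1 * r powr (ups - s2)))"
    by (rule set_nn_integral_product_separated_le) iprover
  fix x0 y0 and e :: real assume p0: "(x0, y0) \<in> offdiag Y" and e: "0 < e"
  define D where "D = dist x0 y0 / 4"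
  have D: "0 < D"
    using p0 by (simp add: D_def offdiag_def)
  obtain \<eta>1 where \<eta>1: "0 < \<eta>1" "\<And>r. 0 < r \<and> r \<le> \<eta>1 \<Longrightarrow> C * D powr -s2 * r powr (ups - s1) \<le> e/2"
    using small_radius_powr_le[of "e/2" "ups - s1"] e s1 by auto
  obtain \<eta>2 where \<eta>2: "0 < \<eta>2" "\<And>r. 0 < r \<and> r \<le> \<eta>2 \<Longrightarrow> C * D powr -s1 * r powr (ups - s2) \<le> e/2"
    using small_radius_powr_le[of "e/2" "ups - s2"] e s2 by auto
  define \<eta> where "\<eta> = min (min \<eta>1 \<eta>2 / 3) D"
  have \<eta>: "0 < \<eta>" "3 * \<eta> \<le> \<eta>1" "3 * \<eta> \<le> \<eta>2" "\<eta> \<le> D"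
    using \<eta>1 \<eta>2 D by (auto simp: \<eta>_def)
  show "\<exists>\<eta>>0. \<forall>x y. (x, y) \<in> offdiag Y \<inter> ball (x0, y0) \<eta> \<longrightarrow>
    (\<integral>\<^sup>+t\<in>ball x0 (2 * \<eta>) \<union> ball y0 (2 * \<eta>). ennreal (cmod (K1 x t * K2 t y)) \<partial>nu) \<le> ennreal e"
  proof (intro exI[of _ \<eta>] conjI allI impI \<eta>(1))
    fix x y assume xy: "(x, y) \<in> offdiag Y \<inter> ball (x0, y0) \<eta>"
    then have "dist x0 x < \<eta>" "dist y0 y < \<eta>"
      using dist_lt_of_mem_ball_pair by auto
    then have "(dist x t < 3 * \<eta> \<and> D \<le> dist y t) \<or> (dist y t < 3 * \<eta> \<and> D \<le> dist x t)"
      if "t \<in> ball x0 (2 * \<eta>) \<union> ball y0 (2 * \<eta>)" for t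
      using that \<eta>(4) dist_triangle[of x t x0] dist_triangle[of y t y0] dist_triangle[of x0 y0 t]
        dist_triangle[of t y0 y] dist_triangle[of x0 t x]
      by (auto simp: dist_commute D_def)
    then have "(\<integral>\<^sup>+t\<in>ball x0 (2 * \<eta>) \<union> ball y0 (2 * \<eta>). ennreal (cmod (K1 x t * K2 t y)) \<partial>nu)
        \<le> ennreal (C * (D powr -s2 * (3 * \<eta>) powr (ups - s1) + D powr -s1 * (3 * \<eta>) powr (ups - s2)))"
      using xy \<eta>(1) D by (intro separated_le) (auto simp: offdiag_def)
    also have "\<dots> \<le> ennreal e"
      using \<eta>1(2)[of "3 * \<eta>"] \<eta>2(2)[of "3 * \<eta>"] \<eta> by (intro ennreal_leI) (simp add: algebra_simps)
    finally show "(\<integral>\<^sup>+t\<in>ball x0 (2 * \<eta>) \<union> ball y0 (2 * \<eta>). ennreal (cmod (K1 x t * K2 t y)) \<partial>nu)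
        \<le> ennreal e" .
  qed
qed

end

theorem theorem4p2:
  fixes Y :: "'a::metric_space set" and nu :: "'a measure"
    and ups s1 s2 :: real and K1 K2 :: "'a \<Rightarrow> 'a \<Rightarrow> complex"
  assumes space_nu: "space nu = Y"
    and borel_sets: "sets (restrict_space borel Y) \<subseteq> sets nu"
    and finite_nu: "emeasure nu Y < \<infinity>"
    and ups_pos: "0 < ups"
    and ahlfors: "upper_ahlfors_regular nu Y ups"
    and s1: "0 \<le> s1" "s1 < ups" and s2: "0 \<le> s2" "s2 < ups"
    and strong: "s1 + s2 = ups \<Longrightarrow> strongly_upper_ahlfors_regular nu Y ups"
    and K1: "K1 \<in> kernel_class s1 Y" and K2: "K2 \<in> kernel_class s2 Y"
  shows
    "(s1 + s2 \<ge> ups \<longrightarrow>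
        (\<forall>x\<in>Y. \<forall>y\<in>Y. x \<noteq> y \<longrightarrow> integrable nu (\<lambda>t. K1 x t * K2 t y)) \<and>
        continuous_on (offdiag Y) (\<lambda>p. LINT t|nu. K1 (fst p) t * K2 t (snd p)) \<and>
        (s1 + s2 > ups \<longrightarrow> (\<exists>C. \<forall>x\<in>Y. \<forall>y\<in>Y. x \<noteq> y \<longrightarrow>
            cmod (LINT t|nu. K1 x t * K2 t y) * dist x y powr (s1 + s2 - ups) \<le> C)) \<and>
        (s1 + s2 = ups \<longrightarrow> (\<exists>C. \<forall>x\<in>Y. \<forall>y\<in>Y. x \<noteq> y \<longrightarrow>
            cmod (LINT t|nu. K1 x t * K2 t y) / (1 + \<bar>ln (dist x y)\<bar>) \<le> C)))
     \<and>
     (s1 + s2 < ups \<longrightarrow>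
        (\<forall>x\<in>Y. \<forall>y\<in>Y. integrable nu (\<lambda>t. K1 x t * K2 t y)) \<and>
        continuous_on (Y \<times> Y) (\<lambda>p. LINT t|nu. K1 (fst p) t * K2 t (snd p)) \<and>
        (\<exists>C. \<forall>x\<in>Y. \<forall>y\<in>Y.
            cmod (LINT t|nu. K1 x t * K2 t y) / (1 + dist x y powr (ups - (s1 + s2))) \<le> C))"
proof -
  obtain r0 c0 where r0: "0 < r0" and c0: "0 < c0" and regular: "\<And>x r. x \<in> Y \<Longrightarrow> 0 < r \<Longrightarrow> r < r0 \<Longrightarrow>
      emeasure nu (ball x r \<inter> Y) \<le> ennreal (c0 * r powr ups)"
    using upper_ahlfors_regularE[OF ahlfors] by blast
  obtain A1 where A1: "0 \<le> A1" "continuous_on (offdiag Y) (\<lambda>p. K1 (fst p) (snd p))"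
    "\<And>x y. x \<in> Y \<Longrightarrow> y \<in> Y \<Longrightarrow> x \<noteq> y \<Longrightarrow> cmod (K1 x y) \<le> A1 * dist x y powr -s1"
    using kernel_classE[OF K1] by blast
  obtain A2 where A2: "0 \<le> A2" "continuous_on (offdiag Y) (\<lambda>p. K2 (fst p) (snd p))"
    "\<And>x y. x \<in> Y \<Longrightarrow> y \<in> Y \<Longrightarrow> x \<noteq> y \<Longrightarrow> cmod (K2 x y) \<le> A2 * dist x y powr -s2"
    using kernel_classE[OF K2] by blast
  interpret kernel_pair nu Y ups r0 c0 K1 K2 s1 s2 A1 A2
    using space_nu borel_sets finite_nu ups_pos r0 c0 regular s1 s2 A1 A2 by unfold_locales auto
  show ?thesis
    using integrable_product_offdiag continuous_on_product_integral_offdiag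
      product_integral_offdiag_bound_gt product_integral_offdiag_bound_log
      integrable_product continuous_on_product_integral_diag product_integral_diag_bound
    by auto
qed

end
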